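(* Let $m\ge1$ and $\widetilde Z_{\mathrm{HT}}(2m;\mathbf x,\mathbf y)=\big[\prod_{i=1}^m x_i^{2m-1}y_i^{2m-1}\big]Z_{\mathrm{HT}}(2m;\mathbf x,\mathbf y)$, which is a polynomial. Then \[ \widetilde Z_{\mathrm{HT}}(2m;\mathbf x,\mathbf y)=\Big[\prod_{i=1}^m x_i^{2(2m-1)}\Big]C_{\mathrm{HT}}(2m)+(\text{terms of lower total degree in }x_1,\dots,x_m),\qquad C_{\mathrm{HT}}(2m)=\prod_{i=1}^{2m}\sigma(a^i). \]
   Context: Notation: $\bar z=z^{-1}$, $\sigma(z)=z-z^{-1}$; $a$ is a fixed nonzero parameter. Vertex weights: at a vertex where a horizontal and a vertical line cross, the four incident edges are oriented with exactly two pointing in. Type 1: horizontal edges in, vertical out; type 2: horizontal out, vertical in; type 3: horizontal right, vertical up; type 4: horizontal left, vertical down; type 5: horizontal left, vertical up; type 6: horizontal right, vertical down. A vertex with spectral parameter $z$ has weight $\sigma(a^2)$ (types 1,2), $\sigma(az)$ (types 3,4), $\sigma(a\bar z)$ (types 5,6). A state is an orientation of internal edges satisfying the two-in rule at every vertex; the partition function is the sum over states of the product of vertex weights. $Z_{\mathrm{HT}}(2m;\mathbf x,\mathbf y)$, $\mathbf x=(x_1,\dots,x_m)$, $\mathbf y=(y_1,\dots,y_m)$: vertices $(r,j)$, $1\le r\le 2m$ (rows from the top), $1\le j\le m$ (columns from the left), vertex $(r,j)$ having parameter $x_{\min(r,2m+1-r)}\bar y_j$; edges join consecutive vertices in rows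 and columns; left boundary edges point right (into the grid), top boundary edges point up, bottom boundary edges point down; for each $r\le m$ the edge to the right of $(r,m)$ and the edge to the right of $(2m+1-r,m)$ form a single edge (a U-turn) with one orientation (out of one of these vertices, into the other). States are in bijection with $2m\times 2m$ half-turn symmetric alternating-sign matrices. *)

theory Defs
  imports Complex_Main
begin

definition sig :: "complex \<Rightarrow> complex" where
  "sig z = z - inverse z"

text \<open>Local configuration at a vertex, given by the four incident edges:
  L = edge to the left  (True = points right, i.e. into the vertex),
  R = edge to the right (True = points right, i.e. out of the vertex),
  A = edge above        (True = points up, i.e. out of the vertex),
  B = edge below        (True = points up, i.e. into the vertex).\<close>
definition n_in :: "bool \<Rightarrow> bool \<Rightarrow> bool \<Rightarrow> bool \<Rightarrow> nat" where
  "n_in L R A B = (if L then 1 else 0) + (if R then 0 else 1) + (if A then 0 else 1) + (if B then 1 else 0)"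

definition vweight :: "complex \<Rightarrow> complex \<Rightarrow> bool \<Rightarrow> bool \<Rightarrow> bool \<Rightarrow> bool \<Rightarrow> complex" where
  "vweight a z L R A B =
     (if (L, R, A, B) = (True, False, True, False) then sig (a\<^sup>2)        \<comment> \<open>type 1\<close>
      else if (L, R, A, B) = (False, True, False, True) then sig (a\<^sup>2)  \<comment> \<open>type 2\<close>
      else if (L, R, A, B) = (True, True, True, True) then sig (a * z)    \<comment> \<open>type 3\<close>
      else if (L, R, A, B) = (False, False, False, False) then sig (a * z) \<comment> \<open>type 4\<close>
      else if (L, R, A, B) = (False, False, True, True) then sig (a * inverse z) \<comment> \<open>type 5\<close>
      else if (L, R, A, B) = (True, True, False, False) then sig (a * inverse z) \<comment> \<open>type 6\<close>
      else 0)"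

text \<open>States of the half-turn model of size 2m.
  h r j (1 \<le> r \<le> 2m, 0 \<le> j \<le> m): horizontal edge to the right of vertex (r,j)
    (j = 0: left boundary edge), True = pointing right.
  v r j (0 \<le> r \<le> 2m, 1 \<le> j \<le> m): vertical edge below vertex (r,j)
    (r = 0: top boundary, r = 2m: bottom boundary), True = pointing up.
  The edges h r m and h (2m+1-r) m are the two ends of the U-turn edge: it points out
  of one of these vertices and into the other, i.e. h r m \<noteq> h (2m+1-r) m.
  Values outside the index ranges are fixed to False so that the set is finite.\<close>
definition HT_states :: "nat \<Rightarrow> ((nat \<Rightarrow> nat \<Rightarrow> bool) \<times> (nat \<Rightarrow> nat \<Rightarrow> bool)) set" where
  "HT_states m = {(h, v).
      (\<forall>r j. \<not> (1 \<le> r \<and> r \<le> 2*m \<and> j \<le> m) \<longrightarrow> \<not> h r j) \<and>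
      (\<forall>r j. \<not> (r \<le> 2*m \<and> 1 \<le> j \<and> j \<le> m) \<longrightarrow> \<not> v r j) \<and>
      (\<forall>r\<in>{1..2*m}. h r 0) \<and>
      (\<forall>j\<in>{1..m}. v 0 j) \<and>
      (\<forall>j\<in>{1..m}. \<not> v (2*m) j) \<and>
      (\<forall>r\<in>{1..m}. h r m \<noteq> h (2*m+1-r) m) \<and>
      (\<forall>r\<in>{1..2*m}. \<forall>j\<in>{1..m}. n_in (h r (j-1)) (h r j) (v (r-1) j) (v r j) = 2)}"

definition Z_HT :: "nat \<Rightarrow> complex \<Rightarrow> (nat \<Rightarrow> complex) \<Rightarrow> (nat \<Rightarrow> complex) \<Rightarrow> complex" where
  "Z_HT m a x y = (\<Sum>(h, v)\<in>HT_states m.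
      \<Prod>r\<in>{1..2*m}. \<Prod>j\<in>{1..m}.
        vweight a (x (min r (2*m+1-r)) * inverse (y j)) (h r (j-1)) (h r j) (v (r-1) j) (v r j))"

definition Z_HT_tilde :: "nat \<Rightarrow> complex \<Rightarrow> (nat \<Rightarrow> complex) \<Rightarrow> (nat \<Rightarrow> complex) \<Rightarrow> complex" where
  "Z_HT_tilde m a x y = (\<Prod>i\<in>{1..m}. x i ^ (2*m-1) * y i ^ (2*m-1)) * Z_HT m a x y"

definition C_HT :: "nat \<Rightarrow> complex \<Rightarrow> complex" where
  "C_HT m a = (\<Prod>i\<in>{1..2*m}. sig (a ^ i))"

end

theory Submission
  imports Defs "HOL-Library.FuncSet"
begin

(* With z = x_i / y_j, every vertex weight is a Laurent polynomial in z: the constant sigma(a^2)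
   where the horizontal arrows turn (types 1, 2), and a z - 1/(a z) or a/z - z/a elsewhere.
   Expanding the product over the 2m^2 vertices and normalising, a term has x-degree at most
   4m^2 - m - T, where T is the number of turns.  Every column contains a turn (otherwise the
   upward top boundary orientation would reach the bottom), so T >= m and the x-degree is at most
   2m(2m-1), with equality exactly for the leading terms of the states with T = m.  Since every row
   pair {i, 2m+1-i} also contains a turn (otherwise both ends of its U-turn would point right), such a
   state has one turn per column and per row pair: it is a half-turn symmetric permutation matrix,
   and its leading term is x_1^(2(2m-1)) ... x_m^(2(2m-1)).  The sum of their leading coefficients
   is computed by induction on the number n of columns whose turns lie in the 2n central rows: some
   column has its turn in one of the two outer rows m-n, m+n+1, and removing it contributes the
   factor sigma(a^(2n+1)) sigma(a^(2n+2)). *)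

lemma card_le_sum_of_ge_1:
  fixes f :: "'a \<Rightarrow> nat"
  assumes "\<forall>i\<in>I. 1 \<le> f i"
  shows "card I \<le> sum f I"
  using sum_mono[of I "\<lambda>_. 1" f] assms by simp

lemma sum_eq_card_imp_eq_1:
  fixes f :: "'a \<Rightarrow> nat"
  assumes I: "finite I" and ge: "\<forall>i\<in>I. 1 \<le> f i" and eq: "sum f I = card I" and i: "i \<in> I"
  shows "f i = 1"
proof (rule ccontr)
  assume "f i \<noteq> 1"
  hence "(\<Sum>i\<in>I. 1) < sum f I" using I ge i by (intro sum_strict_mono_ex1) force+
  thus False using eq by simp
qed

lemma card_eq_sum_card_fibres:
  assumes "finite A" "finite I" "g ` A \<subseteq> I"
  shows "card A = (\<Sum>i\<in>I. card {a\<in>A. g a = i})"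
  using sum.group[OF assms, of "\<lambda>_. 1::nat"] by simp

lemma prod_power_fibres:
  fixes f :: "'b \<Rightarrow> 'c::comm_monoid_mult"
  assumes "finite A" "finite I" "g ` A \<subseteq> I"
  shows "(\<Prod>w\<in>A. f (g w) ^ p w) = (\<Prod>i\<in>I. f i ^ (\<Sum>w\<in>{w\<in>A. g w = i}. p w))"
proof -
  have "(\<Prod>w\<in>A. f (g w) ^ p w) = (\<Prod>i\<in>I. \<Prod>w\<in>{w\<in>A. g w = i}. f (g w) ^ p w)"
    by (rule prod.group[OF assms, symmetric])
  also have "\<dots> = (\<Prod>i\<in>I. f i ^ (\<Sum>w\<in>{w\<in>A. g w = i}. p w))"
    by (intro prod.cong refl) (simp add: power_sum)
  finally show ?thesis .
qed

lemma prod_if_eq_power_card: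
  assumes "finite A"
  shows "(\<Prod>x\<in>A. if P x then u else w) = u ^ card {x\<in>A. P x} * w ^ card {x\<in>A. \<not> P x}"
  using prod.If_cases[OF assms, of P "\<lambda>_. u" "\<lambda>_. w"]
  by (simp add: Int_def Collect_conj_eq[symmetric] set_diff_eq Compl_eq)

lemma sum_if_1_2:
  assumes "finite A"
  shows "(\<Sum>w\<in>A. if P w then 1 else 2::nat) = 2 * card A - card {w\<in>A. P w}"
proof -
  have "(\<Sum>w\<in>A. if P w then 1 else 2::nat) = card {w\<in>A. P w} + 2 * card {w\<in>A. \<not> P w}"
    using sum.If_cases[OF assms, of P "\<lambda>_. 1::nat" "\<lambda>_. 2"]
    by (simp add: Int_def Collect_conj_eq[symmetric] set_diff_eq Compl_eq)
  moreover have "{w\<in>A. \<not> P w} = A - {w\<in>A. P w}" by auto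
  hence "card {w\<in>A. \<not> P w} = card A - card {w\<in>A. P w}"
    using assms by (simp add: card_Diff_subset)
  moreover have "card {w\<in>A. P w} \<le> card A" using assms by (simp add: card_mono)
  ultimately show ?thesis by linarith
qed

lemma sum_regroup_by_key:
  fixes c :: "'p \<Rightarrow> 'c::semiring_0" and \<kappa> :: "'p \<Rightarrow> 'a" and \<mu> :: "'p \<Rightarrow> 'b"
  assumes "finite P"
  obtains S where "finite S" "\<forall>(k1, k2, d)\<in>S. \<exists>p\<in>P. k1 = \<kappa> p \<and> k2 = \<mu> p"
    "\<And>f. (\<Sum>p\<in>P. c p * f (\<kappa> p) (\<mu> p)) = (\<Sum>(k1, k2, d)\<in>S. d * f k1 k2)"
proof
  let ?key = "\<lambda>p. (\<kappa> p, \<mu> p)"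
  let ?g = "\<lambda>k. (fst k, snd k, \<Sum>p\<in>{p\<in>P. ?key p = k}. c p)"
  show "finite (?g ` ?key ` P)" using finite_imageI[OF finite_imageI[OF assms]] .
  show "\<forall>(k1, k2, d)\<in>?g ` ?key ` P. \<exists>p\<in>P. k1 = \<kappa> p \<and> k2 = \<mu> p" by auto
  fix f
  have "(\<Sum>p\<in>P. c p * f (\<kappa> p) (\<mu> p)) =
      (\<Sum>k\<in>?key ` P. \<Sum>p\<in>{p\<in>P. ?key p = k}. c p * f (\<kappa> p) (\<mu> p))"
    using assms by (intro sum.group[symmetric] finite_imageI) auto
  also have "\<dots> = (\<Sum>k\<in>?key ` P. (\<Sum>p\<in>{p\<in>P. ?key p = k}. c p) * f (fst k) (snd k))"
    by (auto simp: sum_distrib_right intro!: sum.cong)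
  also have "\<dots> = (\<Sum>(k1, k2, d)\<in>?g ` ?key ` P. d * f k1 k2)"
    by (subst sum.reindex) (auto simp: inj_on_def prod_eq_iff)
  finally show "(\<Sum>p\<in>P. c p * f (\<kappa> p) (\<mu> p)) = (\<Sum>(k1, k2, d)\<in>?g ` ?key ` P. d * f k1 k2)" .
qed

lemma power_shift_cancel:
  fixes z :: "'a::field"
  assumes "z \<noteq> 0" "1 \<le> X" "1 \<le> N"
  shows "z ^ (N - 1) * z ^ X * inverse z ^ N = z ^ (X - 1)"
proof -
  obtain X' where X: "X = Suc X'" using assms(2) by (cases X) auto
  obtain N' where N: "N = Suc N'" using assms(3) by (cases N) auto
  show ?thesis unfolding X N using assms(1) by (simp add: power_inverse field_simps power_add[symmetric])
qed

lemma sum_over_ranks: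
  fixes J :: "nat set" and g :: "nat \<Rightarrow> 'b::comm_monoid_add"
  assumes "finite J"
  shows "(\<Sum>c\<in>J. g (card {j\<in>J. j < c})) = (\<Sum>k<card J. g k)"
  using assms
proof (induction J rule: finite_linorder_max_induct)
  case empty then show ?case by simp
next
  case (insert b A)
  have "b \<notin> A" using insert by auto
  have "(\<Sum>c\<in>A. g (card {j\<in>insert b A. j < c})) = (\<Sum>c\<in>A. g (card {j\<in>A. j < c}))"
    using insert by (intro sum.cong refl arg_cong[where f="\<lambda>X. g (card X)"]) auto
  moreover have "{j\<in>insert b A. j < b} = A" using insert by auto
  ultimately show ?case using insert \<open>b \<notin> A\<close> by (simp add: add.commute)
qed

lemma mem_or_reflection_mem:
  fixes X :: "nat set"
  assumes XS: "X \<subseteq> {m+1-k..m+k}" and km: "k \<le> m" and cX: "card X = k"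
    and no_pair: "\<forall>x\<in>X. \<forall>y\<in>X. x + y \<noteq> 2*m+1"
    and r: "r \<in> {m+1-k..m+k}"
  shows "r \<in> X \<or> 2*m+1-r \<in> X"
proof -
  define f where "f x = min x (2*m+1-x)" for x :: nat
  have inj: "inj_on f X"
  proof (rule inj_onI)
    fix x y assume xX: "x \<in> X" and yX: "y \<in> X" and e: "f x = f y"
    have "x \<le> 2*m" "y \<le> 2*m" "x + y \<noteq> 2*m+1" using xX yX XS km no_pair by auto
    then show "x = y" using e unfolding f_def by (auto simp: min_def split: if_splits)
  qed
  have sub: "f ` X \<subseteq> {m+1-k..m}"
  proof
    fix z assume "z \<in> f ` X"
    then obtain x where "x \<in> {m+1-k..m+k}" "z = f x" using XS by auto
    then show "z \<in> {m+1-k..m}" using km unfolding f_def by (auto simp: min_def)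
  qed
  have "card (f ` X) = card {m+1-k..m}" using card_image[OF inj] cX km by simp
  hence eq: "f ` X = {m+1-k..m}" using card_subset_eq[OF _ sub] by simp
  have "f r \<in> {m+1-k..m}" using r km unfolding f_def by (auto simp: min_def)
  then obtain x where xX: "x \<in> X" and fx: "f x = f r" using eq by (metis imageE)
  have "x \<le> 2*m" using xX XS km by auto
  hence "x = r \<or> x = 2*m+1-r" using fx r km unfolding f_def by (auto simp: min_def split: if_splits)
  thus ?thesis using xX by auto
qed

section \<open>Half-turn symmetric placements of turns\<close>

definition central_rows :: "nat \<Rightarrow> nat \<Rightarrow> nat set" where
  "central_rows m n = {m+1-n..m+n}"

text \<open>A placement assigns to each column \<open>j \<in> J\<close> the row \<open>\<rho> j\<close> of its turn, inside the \<open>2n\<close>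
  central rows. The half-turn maps a turn in row \<open>r\<close> to row \<open>2m+1-r\<close> of the right half, so
  \<open>\<rho> i + \<rho> j \<noteq> 2m+1\<close> says that no row of the full matrix gets two turns; for \<open>n = m\<close> and
  \<open>J = {1..m}\<close> these are the half-turn symmetric \<open>2m \<times> 2m\<close> permutation matrices.\<close>

definition ht_placements :: "nat \<Rightarrow> nat \<Rightarrow> nat set \<Rightarrow> (nat \<Rightarrow> nat) set" where
  "ht_placements m n J = {\<rho>. (\<forall>j\<in>J. \<rho> j \<in> central_rows m n) \<and> inj_on \<rho> J \<and>
      (\<forall>i\<in>J. \<forall>j\<in>J. \<rho> i + \<rho> j \<noteq> 2*m+1) \<and> (\<forall>j. j \<notin> J \<longrightarrow> \<rho> j = 0)}"

text \<open>Away from the turn it is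
  \<open>a\<close> (types 3, 4) if the horizontal arrow points right (row \<open>r\<close> has no turn in the columns
  \<open>\<le> j\<close>) exactly when the vertical arrow points up (\<open>r < \<rho> j\<close>), and \<open>-1/a\<close> (types 5, 6)
  otherwise.\<close>

definition leading_weight :: "complex \<Rightarrow> nat set \<Rightarrow> (nat \<Rightarrow> nat) \<Rightarrow> nat \<Rightarrow> nat \<Rightarrow> complex" where
  "leading_weight a J \<rho> r j = (if \<rho> j = r then sig (a^2)
      else if (\<forall>c\<in>J. c \<le> j \<longrightarrow> \<rho> c \<noteq> r) = (r < \<rho> j) then a else - inverse a)"

definition placement_weight :: "complex \<Rightarrow> nat \<Rightarrow> nat \<Rightarrow> nat set \<Rightarrow> (nat \<Rightarrow> nat) \<Rightarrow> complex" where
  "placement_weight a m n J \<rho> = (\<Prod>j\<in>J. \<Prod>r\<in>central_rows m n. leading_weight a J \<rho> r j)"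

lemma finite_central_rows [simp]: "finite (central_rows m n)"
  by (simp add: central_rows_def)

lemma card_central_rows: "n \<le> m + 1 \<Longrightarrow> card (central_rows m n) = 2*n"
  unfolding central_rows_def by simp

lemma central_rows_Suc:
  assumes "Suc n \<le> m"
  shows "central_rows m (Suc n) = insert (m-n) (insert (m+n+1) (central_rows m n))"
  using assms unfolding central_rows_def by auto

lemma outer_rows_notin_central_rows:
  assumes "Suc n \<le> m"
  shows "m - n \<notin> central_rows m n" "m + n + 1 \<notin> central_rows m n"
  using assms unfolding central_rows_def by auto

lemma finite_ht_placements:
  assumes "finite J" shows "finite (ht_placements m n J)"
proof -
  let ?g = "\<lambda>f j. if j \<in> J then f j else (0::nat)"
  have "ht_placements m n J \<subseteq> ?g ` (J \<rightarrow>\<^sub>E central_rows m n)"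
  proof
    fix \<rho> assume \<rho>: "\<rho> \<in> ht_placements m n J"
    have "\<rho> = ?g (restrict \<rho> J)" using \<rho> unfolding ht_placements_def by (auto simp: fun_eq_iff)
    moreover have "restrict \<rho> J \<in> J \<rightarrow>\<^sub>E central_rows m n" using \<rho> unfolding ht_placements_def by auto
    ultimately show "\<rho> \<in> ?g ` (J \<rightarrow>\<^sub>E central_rows m n)" by blast
  qed
  moreover have "finite (J \<rightarrow>\<^sub>E central_rows m n)" using assms by (auto intro: finite_PiE)
  ultimately show ?thesis using finite_subset by blast
qed

lemma ht_placements_extend:
  assumes c: "c \<in> J" and t: "t \<in> {m-n, m+n+1}" and nm: "Suc n \<le> m"
    and \<rho>: "\<rho> \<in> ht_placements m n (J - {c})"
  shows "\<rho>(c := t) \<in> ht_placements m (Suc n) J"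
proof -
  have rows: "\<forall>j\<in>J - {c}. \<rho> j \<in> central_rows m n" and inj: "inj_on \<rho> (J - {c})"
    and no_pair: "\<forall>i\<in>J - {c}. \<forall>j\<in>J - {c}. \<rho> i + \<rho> j \<noteq> 2*m+1"
    and zero: "\<forall>j. j \<notin> J - {c} \<longrightarrow> \<rho> j = 0"
    using \<rho> unfolding ht_placements_def by auto
  have t_new: "t \<notin> \<rho> ` (J - {c})" and t_pair: "\<And>k. k \<in> J - {c} \<Longrightarrow> t + \<rho> k \<noteq> 2*m+1"
    using rows t nm by (force simp: central_rows_def)+
  have "inj_on (\<rho>(c := t)) (J - {c})" using inj by (simp add: inj_on_def)
  moreover have "t \<notin> (\<rho>(c := t)) ` (J - {c})" using t_new by simp
  ultimately have "inj_on (\<rho>(c := t)) (insert c (J - {c}))" by (intro iffD2[OF inj_on_insert]) simp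
  hence "inj_on (\<rho>(c := t)) J" using c by (simp add: insert_absorb)
  moreover have "\<forall>i\<in>J. \<forall>j\<in>J. (\<rho>(c := t)) i + (\<rho>(c := t)) j \<noteq> 2*m+1"
  proof (intro ballI)
    fix i j assume "i \<in> J" "j \<in> J"
    then show "(\<rho>(c := t)) i + (\<rho>(c := t)) j \<noteq> 2*m+1"
      using t_pair[of i] t_pair[of j] no_pair t nm by (cases "i = c"; cases "j = c") auto
  qed
  moreover have "\<forall>j\<in>J. (\<rho>(c := t)) j \<in> central_rows m (Suc n)"
    using rows t central_rows_Suc[OF nm] by auto
  moreover have "\<forall>j. j \<notin> J \<longrightarrow> (\<rho>(c := t)) j = 0" using zero c by auto
  ultimately show ?thesis unfolding ht_placements_def by simp
qed

lemma ht_placements_outer_column: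
  assumes \<rho>: "\<rho> \<in> ht_placements m (Suc n) J" and cJ: "card J = Suc n" and nm: "Suc n \<le> m"
  obtains c where "c \<in> J" "\<rho> c \<in> {m-n, m+n+1}"
proof -
  have inj: "inj_on \<rho> J" and no_pair: "\<forall>i\<in>J. \<forall>j\<in>J. \<rho> i + \<rho> j \<noteq> 2*m+1"
    and X: "\<rho> ` J \<subseteq> {m+1-Suc n..m+Suc n}"
    using \<rho> unfolding ht_placements_def central_rows_def by auto
  have "m - n \<in> \<rho> ` J \<or> 2*m+1-(m-n) \<in> \<rho> ` J"
    by (rule mem_or_reflection_mem[OF X nm]) (use card_image[OF inj] cJ no_pair nm in auto)
  then show ?thesis using nm that by auto
qed

lemma ht_placements_restrict:
  assumes \<rho>: "\<rho> \<in> ht_placements m (Suc n) J" and nm: "Suc n \<le> m"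
    and c: "c \<in> J" "\<rho> c \<in> {m-n, m+n+1}"
  shows "\<rho>(c := 0) \<in> ht_placements m n (J - {c})"
proof -
  have rows: "\<forall>j\<in>J. \<rho> j \<in> central_rows m (Suc n)" and inj: "inj_on \<rho> J"
    and no_pair: "\<forall>i\<in>J. \<forall>j\<in>J. \<rho> i + \<rho> j \<noteq> 2*m+1"
    and zero: "\<forall>j. j \<notin> J \<longrightarrow> \<rho> j = 0"
    using \<rho> unfolding ht_placements_def by auto
  have "\<rho> j \<in> central_rows m n" if j: "j \<in> J - {c}" for j
  proof -
    have "\<rho> j \<noteq> \<rho> c" using inj j c(1) by (auto simp: inj_on_def)
    moreover have "\<rho> j + \<rho> c \<noteq> 2*m+1" using no_pair j c(1) by auto
    ultimately show ?thesis using rows j c(2) nm unfolding central_rows_def by auto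
  qed
  moreover have "inj_on (\<rho>(c := 0)) (J - {c})" using inj by (auto simp: inj_on_def)
  ultimately show ?thesis using no_pair zero unfolding ht_placements_def by auto
qed

lemma ht_placements_Suc_bij:
  assumes cJ: "card J = Suc n" and nm: "Suc n \<le> m"
  shows "bij_betw (\<lambda>(c, t, \<rho>). \<rho>(c := t))
           (SIGMA c:J. {m-n, m+n+1} \<times> ht_placements m n (J - {c})) (ht_placements m (Suc n) J)"
proof (rule bij_betwI')
  fix p q assume p: "p \<in> (SIGMA c:J. {m-n, m+n+1} \<times> ht_placements m n (J - {c}))"
    and q: "q \<in> (SIGMA c:J. {m-n, m+n+1} \<times> ht_placements m n (J - {c}))"
  obtain c1 t1 \<rho>1 where p': "p = (c1, t1, \<rho>1)" by (cases p) auto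
  obtain c2 t2 \<rho>2 where q': "q = (c2, t2, \<rho>2)" by (cases q) auto
  have 1: "c1 \<in> J" "t1 \<in> {m-n, m+n+1}" "\<rho>1 \<in> ht_placements m n (J - {c1})" using p p' by auto
  have 2: "c2 \<in> J" "t2 \<in> {m-n, m+n+1}" "\<rho>2 \<in> ht_placements m n (J - {c2})" using q q' by auto
  show "((\<lambda>(c, t, \<rho>). \<rho>(c := t)) p = (\<lambda>(c, t, \<rho>). \<rho>(c := t)) q) = (p = q)"
  proof
    assume "(\<lambda>(c, t, \<rho>). \<rho>(c := t)) p = (\<lambda>(c, t, \<rho>). \<rho>(c := t)) q"
    hence e: "\<rho>1(c1 := t1) = \<rho>2(c2 := t2)" using p' q' by simp
    have "c1 = c2"
    proof (rule ccontr)
      assume ne: "c1 \<noteq> c2"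
      have "t1 = \<rho>2 c1" using fun_cong[OF e, of c1] ne by simp
      moreover have "\<rho>2 c1 \<in> central_rows m n" using 2(3) 1(1) ne unfolding ht_placements_def by auto
      ultimately show False using 1(2) outer_rows_notin_central_rows[OF nm] by auto
    qed
    moreover have "\<rho>1 = \<rho>2"
    proof
      fix j show "\<rho>1 j = \<rho>2 j"
        using fun_cong[OF e, of j] 1(3) 2(3) \<open>c1 = c2\<close> unfolding ht_placements_def
        by (cases "j = c1") auto
    qed
    ultimately show "p = q" using p' q' fun_cong[OF e, of c1] by simp
  qed simp
  show "(\<lambda>(c, t, \<rho>). \<rho>(c := t)) p \<in> ht_placements m (Suc n) J"
    using ht_placements_extend[OF 1(1,2) nm 1(3)] p' by simp
next
  fix \<rho> assume \<rho>: "\<rho> \<in> ht_placements m (Suc n) J"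
  obtain c where c: "c \<in> J" "\<rho> c \<in> {m-n, m+n+1}"
    using ht_placements_outer_column[OF \<rho> cJ nm] .
  show "\<exists>p\<in>(SIGMA c:J. {m-n, m+n+1} \<times> ht_placements m n (J - {c})). \<rho> = (\<lambda>(c, t, \<rho>). \<rho>(c := t)) p"
    using c ht_placements_restrict[OF \<rho> nm c] by (intro bexI[of _ "(c, \<rho> c, \<rho>(c := 0))"]) auto
qed

definition top_row_factor :: "complex \<Rightarrow> nat \<Rightarrow> nat \<Rightarrow> complex" where
  "top_row_factor a n k = sig (a^2) * a^(2*k) * (- inverse a)^(4*n+1-2*k)"

definition bottom_row_factor :: "complex \<Rightarrow> nat \<Rightarrow> nat \<Rightarrow> complex" where
  "bottom_row_factor a n k = sig (a^2) * a^(4*n+1-2*k) * (- inverse a)^(2*k)"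

text \<open>Giving the column \<open>c\<close> its turn in an outer row \<open>t\<close> multiplies the weight by a factor that
  depends only on \<open>t\<close> and on the number of columns of \<open>J\<close> to the left of \<open>c\<close>.\<close>

locale placement_extension =
  fixes a :: complex and m n :: nat and J :: "nat set" and c :: nat
    and \<rho> :: "nat \<Rightarrow> nat" and t :: nat
  assumes finite_J: "finite J" and c_in_J: "c \<in> J" and Suc_n_le_m: "Suc n \<le> m"
    and card_J: "card J = Suc n" and \<rho>_placement: "\<rho> \<in> ht_placements m n (J - {c})"
    and t_outer: "t \<in> {m-n, m+n+1}"
begin

abbreviation "J' \<equiv> J - {c}"
abbreviation "R \<equiv> central_rows m n"
definition "K = {j\<in>J'. j < c}"
abbreviation "\<rho>' \<equiv> \<rho>(c := t)"
abbreviation "ia \<equiv> - inverse a"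

lemma \<rho>_rows: "j \<in> J' \<Longrightarrow> \<rho> j \<in> R"
  using \<rho>_placement unfolding ht_placements_def by auto

lemma t_notin_R: "t \<notin> R"
  using t_outer outer_rows_notin_central_rows[OF Suc_n_le_m] by auto

lemma card_J': "card J' = n"
  using card_J c_in_J finite_J by simp

lemma card_K_le: "card K \<le> n"
  using card_mono[of J' K] finite_J card_J' unfolding K_def by auto

lemma card_J'_minus_K: "card {j\<in>J'. \<not> j < c} = n - card K"
proof -
  have "finite K" "K \<subseteq> J'" using finite_J unfolding K_def by auto
  moreover have "{j\<in>J'. \<not> j < c} = J' - K" unfolding K_def by auto
  ultimately show ?thesis using card_J' by (simp add: card_Diff_subset)
qed

lemma card_R_minus_\<rho>_K: "card (R - \<rho> ` K) = 2*n - card K"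
proof -
  have "\<rho> ` K \<subseteq> R" using \<rho>_rows unfolding K_def by auto
  moreover have "card (\<rho> ` K) = card K"
    using \<rho>_placement unfolding K_def
    by (intro card_image) (auto simp: ht_placements_def intro: inj_on_subset)
  ultimately show ?thesis
    using Suc_n_le_m card_central_rows[of n m] card_Diff_subset[of "\<rho> ` K" R]
      finite_subset[of "\<rho> ` K" R] by simp
qed

lemma visited_before_iff:
  assumes "r \<noteq> t"
  shows "(\<forall>c'\<in>J. c' \<le> j \<longrightarrow> \<rho>' c' \<noteq> r) = (\<forall>c'\<in>J'. c' \<le> j \<longrightarrow> \<rho> c' \<noteq> r)"
  using assms by auto

lemma leading_weight_old_column:
  assumes "j \<in> J'" "r \<in> R"
  shows "leading_weight a J \<rho>' r j = leading_weight a J' \<rho> r j"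
  using assms t_notin_R visited_before_iff[of r j] unfolding leading_weight_def by auto

lemma placement_weight_split:
  "placement_weight a m (Suc n) J \<rho>' =
    (\<Prod>r\<in>central_rows m (Suc n). leading_weight a J \<rho>' r c) *
    ((\<Prod>j\<in>J'. leading_weight a J \<rho>' (m-n) j) * (\<Prod>j\<in>J'. leading_weight a J \<rho>' (m+n+1) j) *
     placement_weight a m n J' \<rho>)"
proof -
  have rows: "(\<Prod>r\<in>central_rows m (Suc n). f r) = f (m-n) * f (m+n+1) * (\<Prod>r\<in>R. f r)" for f
    using central_rows_Suc[OF Suc_n_le_m] outer_rows_notin_central_rows[OF Suc_n_le_m]
    by (simp add: mult.assoc)
  have "placement_weight a m (Suc n) J \<rho>' = (\<Prod>r\<in>central_rows m (Suc n). leading_weight a J \<rho>' r c) *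
         (\<Prod>j\<in>J'. \<Prod>r\<in>central_rows m (Suc n). leading_weight a J \<rho>' r j)"
    unfolding placement_weight_def using prod.remove[OF finite_J c_in_J] by simp
  also have "(\<Prod>j\<in>J'. \<Prod>r\<in>central_rows m (Suc n). leading_weight a J \<rho>' r j) =
       (\<Prod>j\<in>J'. leading_weight a J \<rho>' (m-n) j) * (\<Prod>j\<in>J'. leading_weight a J \<rho>' (m+n+1) j) *
       (\<Prod>j\<in>J'. \<Prod>r\<in>R. leading_weight a J' \<rho> r j)"
    by (simp add: rows prod.distrib leading_weight_old_column)
  finally show ?thesis unfolding placement_weight_def .
qed

lemma new_row_prod:
  "(\<Prod>j\<in>J'. leading_weight a J \<rho>' t j) =
     (if t = m-n then a ^ card K * ia ^ (n - card K) else ia ^ card K * a ^ (n - card K))"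
proof -
  have "(\<Prod>j\<in>J'. leading_weight a J \<rho>' t j) =
        (\<Prod>j\<in>J'. if j < c then (if t = m-n then a else ia) else (if t = m-n then ia else a))"
  proof (intro prod.cong refl)
    fix j assume j: "j \<in> J'"
    have "\<rho> j \<noteq> t" and "(t < \<rho> j) = (t = m-n)"
      using \<rho>_rows[OF j] t_notin_R t_outer Suc_n_le_m by (auto simp: central_rows_def)
    moreover have "(\<forall>c'\<in>J. c' \<le> j \<longrightarrow> \<rho>' c' \<noteq> t) = (j < c)"
      using j c_in_J \<rho>_rows t_notin_R by auto
    ultimately show "leading_weight a J \<rho>' t j =
        (if j < c then (if t = m-n then a else ia) else (if t = m-n then ia else a))"
      unfolding leading_weight_def using j by auto
  qed
  also have "\<dots> = (if t = m-n then a else ia) ^ card K * (if t = m-n then ia else a) ^ (n - card K)"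
    using finite_J by (simp only: prod_if_eq_power_card[OF finite_Diff] card_J'_minus_K flip: K_def)
  finally show ?thesis by simp
qed

lemma other_outer_row_unvisited:
  assumes "s \<in> {m-n, m+n+1}" "s \<noteq> t" "c' \<in> J"
  shows "\<rho>' c' \<noteq> s"
  using assms \<rho>_rows[of c'] outer_rows_notin_central_rows[OF Suc_n_le_m] by (cases "c' = c") auto

lemma other_row_prod:
  assumes "s \<in> {m-n, m+n+1}" "s \<noteq> t"
  shows "(\<Prod>j\<in>J'. leading_weight a J \<rho>' s j) = (if s = m-n then a ^ n else ia ^ n)"
proof -
  have "leading_weight a J \<rho>' s j = (if s = m-n then a else ia)" if j: "j \<in> J'" for j
  proof -
    have "\<rho> j \<noteq> s" "(s < \<rho> j) = (s = m-n)"
      using \<rho>_rows[OF j] assms Suc_n_le_m by (auto simp: central_rows_def)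
    then show ?thesis
      using j other_outer_row_unvisited[OF assms] unfolding leading_weight_def by auto
  qed
  thus ?thesis using card_J' by simp
qed

lemma new_column_old_rows_prod:
  "(\<Prod>r\<in>R. leading_weight a J \<rho>' r c) =
     (if t = m-n then a ^ card K * ia ^ (2*n - card K) else ia ^ card K * a ^ (2*n - card K))"
proof -
  have "(\<Prod>r\<in>R. leading_weight a J \<rho>' r c) =
        (\<Prod>r\<in>R. if r \<in> \<rho> ` K then (if t = m-n then a else ia) else (if t = m-n then ia else a))"
  proof (intro prod.cong refl)
    fix r assume r: "r \<in> R"
    have "r \<noteq> t" "(r < t) = (t \<noteq> m-n)"
      using r t_notin_R t_outer Suc_n_le_m by (auto simp: central_rows_def)
    moreover have "(\<forall>c'\<in>J'. c' \<le> c \<longrightarrow> \<rho> c' \<noteq> r) = (r \<notin> \<rho> ` K)"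
      unfolding K_def by (auto simp: le_less)
    ultimately show "leading_weight a J \<rho>' r c =
        (if r \<in> \<rho> ` K then (if t = m-n then a else ia) else (if t = m-n then ia else a))"
      unfolding leading_weight_def using visited_before_iff[of r c] by auto
  qed
  moreover have "{r\<in>R. r \<in> \<rho> ` K} = \<rho> ` K" "{r\<in>R. r \<notin> \<rho> ` K} = R - \<rho> ` K"
    using \<rho>_rows unfolding K_def by auto
  moreover have "card (\<rho> ` K) = card K"
    using \<rho>_placement unfolding K_def
    by (intro card_image) (auto simp: ht_placements_def intro: inj_on_subset)
  ultimately show ?thesis
    by (simp only: prod_if_eq_power_card[OF finite_central_rows] card_R_minus_\<rho>_K) simp
qed

lemma new_column_prod:
  "(\<Prod>r\<in>central_rows m (Suc n). leading_weight a J \<rho>' r c) =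
     (if t = m-n then sig (a^2) * ia * (a ^ card K * ia ^ (2*n - card K))
      else a * sig (a^2) * (ia ^ card K * a ^ (2*n - card K)))"
proof -
  have "leading_weight a J \<rho>' t c = sig (a^2)" unfolding leading_weight_def by simp
  moreover have "t = m-n \<Longrightarrow> leading_weight a J \<rho>' (m+n+1) c = ia"
    using other_outer_row_unvisited[of "m+n+1"] Suc_n_le_m unfolding leading_weight_def by auto
  moreover have "t = m+n+1 \<Longrightarrow> leading_weight a J \<rho>' (m-n) c = a"
    using other_outer_row_unvisited[of "m-n"] Suc_n_le_m unfolding leading_weight_def by auto
  moreover have "m+n+1 \<noteq> m-n" by arith
  ultimately show ?thesis
    using new_column_old_rows_prod t_outer central_rows_Suc[OF Suc_n_le_m]
      outer_rows_notin_central_rows[OF Suc_n_le_m]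
    by (auto simp: mult_ac)
qed

lemma placement_weight_extend:
  "placement_weight a m (Suc n) J \<rho>' =
     (if t = m-n then top_row_factor a n (card {j\<in>J. j < c})
      else bottom_row_factor a n (card {j\<in>J. j < c})) * placement_weight a m n J' \<rho>"
proof -
  have "K = {j\<in>J. j < c}" unfolding K_def by auto
  have e: "4*n+1-2*card K = Suc ((2*n - card K) + (n - card K) + n)" using card_K_le by arith
  have ne: "m+n+1 \<noteq> m-n" by arith
  show ?thesis
  proof (cases "t = m-n")
    case True
    then show ?thesis
      using placement_weight_split new_column_prod new_row_prod other_row_prod[of "m+n+1"] ne
      unfolding top_row_factor_def e \<open>K = _\<close>[symmetric] by (simp add: power_add mult_2 mult_ac)
  next
    case False
    then have "t = m+n+1" using t_outer by auto
    then show ?thesis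
      using placement_weight_split new_column_prod new_row_prod other_row_prod[of "m-n"] ne
      unfolding bottom_row_factor_def e \<open>K = _\<close>[symmetric] by (simp add: power_add mult_2 mult_ac)
  qed
qed

end

lemma row_factors_sum:
  assumes a: "a \<noteq> 0" and k: "k \<le> n"
  shows "top_row_factor a n k + bottom_row_factor a n k = sig (a^2) * sig (a^(4*(n-k)+1))"
proof -
  define p where "p = 4*(n-k)+1"
  have ep: "4*n+1-2*k = p + 2*k" and odd: "4*n+1-2*k = 2*(2*n-k) + 1" unfolding p_def using k by arith+
  have inv: "a^(2*k) * inverse a ^ (2*k) = 1" using a by (simp add: power_mult_distrib[symmetric])
  have "top_row_factor a n k = - sig (a^2) * (a^(2*k) * inverse a ^ (4*n+1-2*k))"
    unfolding top_row_factor_def odd by (simp add: power_mult power2_eq_square)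
  also have "a^(2*k) * inverse a ^ (4*n+1-2*k) = inverse a ^ p"
    unfolding ep power_add using inv by (simp add: mult_ac)
  moreover have "bottom_row_factor a n k = sig (a^2) * (a^(4*n+1-2*k) * inverse a ^ (2*k))"
    unfolding bottom_row_factor_def by (simp add: power_mult)
  moreover have "a^(4*n+1-2*k) * inverse a ^ (2*k) = a ^ p"
    unfolding ep power_add using inv by (simp add: mult_ac)
  ultimately have "top_row_factor a n k + bottom_row_factor a n k =
      sig (a^2) * (a^p - inverse a ^ p)" by (simp add: algebra_simps)
  moreover have "sig (a^p) = a^p - inverse a ^ p" by (simp add: sig_def power_inverse)
  ultimately show ?thesis unfolding p_def by simp
qed

lemma sig_power_identity:
  assumes a: "a \<noteq> 0"
  shows "sig (a^2) * sig (a^(4*n+5)) + sig (a^(2*n+1)) * sig (a^(2*n+2)) =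
         sig (a^(2*n+3)) * sig (a^(2*n+4))"
proof -
  define A where "A = a^(2*n)"
  have A: "A \<noteq> 0" using a unfolding A_def by simp
  have "a^(4*n+5) = a^(2*n+2*n+5)" by (rule arg_cong[where f="power a"]) arith
  hence e: "a^(4*n+5) = A*A*a^5" "a^(2*n+1) = A*a" "a^(2*n+2) = A*a^2" "a^(2*n+3) = A*a^3"
    "a^(2*n+4) = A*a^4"
    unfolding A_def by (simp_all only: power_add power_one_right)
  show ?thesis unfolding e sig_def using a A by (simp add: field_simps eval_nat_numeral)
qed

lemma sum_row_factors:
  assumes a: "a \<noteq> 0"
  shows "(\<Sum>k<Suc n. top_row_factor a n k + bottom_row_factor a n k) =
         sig (a^(2*n+1)) * sig (a^(2*n+2))"
proof -
  have "(\<Sum>k<Suc n. top_row_factor a n k + bottom_row_factor a n k) =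
        sig (a^2) * (\<Sum>k<Suc n. sig (a^(4*(n-k)+1)))"
    unfolding sum_distrib_left by (intro sum.cong refl) (simp add: row_factors_sum[OF a])
  also have "\<dots> = sig (a^(2*n+1)) * sig (a^(2*n+2))"
  proof (induction n)
    case 0 thus ?case by (simp add: mult.commute power2_eq_square)
  next
    case (Suc n)
    have "(\<Sum>k<Suc (Suc n). sig (a^(4*(Suc n-k)+1))) =
          sig (a^(4*n+5)) + (\<Sum>k<Suc n. sig (a^(4*(n-k)+1)))"
      by (subst sum.lessThan_Suc_shift) (simp add: add.commute)
    hence "sig (a^2) * (\<Sum>k<Suc (Suc n). sig (a^(4*(Suc n-k)+1))) =
           sig (a^2) * sig (a^(4*n+5)) + sig (a^(2*n+1)) * sig (a^(2*n+2))"
      using Suc.IH by (simp add: distrib_left)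
    also have "\<dots> = sig (a^(2*n+3)) * sig (a^(2*n+4))" by (rule sig_power_identity[OF a])
    finally show ?case by (simp add: numeral_eq_Suc)
  qed
  finally show ?thesis .
qed

lemma sum_placement_weight_new_column:
  assumes "finite J" "card J = Suc n" "Suc n \<le> m" "c \<in> J"
  shows "(\<Sum>(t, \<rho>)\<in>{m-n, m+n+1} \<times> ht_placements m n (J - {c}).
            placement_weight a m (Suc n) J (\<rho>(c := t))) =
         (top_row_factor a n (card {j\<in>J. j < c}) + bottom_row_factor a n (card {j\<in>J. j < c})) *
         (\<Sum>\<rho>\<in>ht_placements m n (J - {c}). placement_weight a m n (J - {c}) \<rho>)"
proof -
  have "placement_weight a m (Suc n) J (\<rho>(c := t)) =
      (if t = m-n then top_row_factor a n (card {j\<in>J. j < c})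
       else bottom_row_factor a n (card {j\<in>J. j < c})) * placement_weight a m n (J - {c}) \<rho>"
    if "t \<in> {m-n, m+n+1}" "\<rho> \<in> ht_placements m n (J - {c})" for t \<rho>
    using assms that by (intro placement_extension.placement_weight_extend) unfold_locales
  moreover have "m - n \<noteq> m+n+1" by arith
  ultimately show ?thesis
    by (simp add: sum.cartesian_product[symmetric] sum_distrib_left[symmetric] distrib_right)
qed

lemma sum_placement_weight:
  assumes a: "a \<noteq> 0"
  shows "finite J \<Longrightarrow> card J = n \<Longrightarrow> n \<le> m \<Longrightarrow>
    (\<Sum>\<rho>\<in>ht_placements m n J. placement_weight a m n J \<rho>) =
    (\<Prod>i<n. sig (a^(2*i+1)) * sig (a^(2*i+2)))"
proof (induction n arbitrary: J)
  case 0
  hence "J = {}" by simp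
  moreover have "ht_placements m 0 {} = {\<lambda>_. 0}" unfolding ht_placements_def by auto
  ultimately show ?case unfolding placement_weight_def by simp
next
  case (Suc n)
  let ?f = "\<lambda>k. top_row_factor a n k + bottom_row_factor a n k"
  let ?IH = "\<Prod>i<n. sig (a^(2*i+1)) * sig (a^(2*i+2))"
  have "(\<Sum>\<rho>\<in>ht_placements m (Suc n) J. placement_weight a m (Suc n) J \<rho>) =
        (\<Sum>(c, t, \<rho>)\<in>(SIGMA c:J. {m-n, m+n+1} \<times> ht_placements m n (J - {c})).
           placement_weight a m (Suc n) J (\<rho>(c := t)))"
    using sum.reindex_bij_betw[OF ht_placements_Suc_bij, symmetric] Suc.prems
    by (simp add: case_prod_unfold)
  also have "\<dots> = (\<Sum>c\<in>J. \<Sum>(t, \<rho>)\<in>{m-n, m+n+1} \<times> ht_placements m n (J - {c}).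
                      placement_weight a m (Suc n) J (\<rho>(c := t)))"
    using Suc.prems by (subst sum.Sigma) (auto simp: finite_ht_placements split_def)
  also have "\<dots> = (\<Sum>c\<in>J. ?f (card {j\<in>J. j < c}) * ?IH)"
  proof (rule sum.cong[OF refl])
    fix c assume c: "c \<in> J"
    then show "(\<Sum>(t, \<rho>)\<in>{m-n, m+n+1} \<times> ht_placements m n (J - {c}).
        placement_weight a m (Suc n) J (\<rho>(c := t))) = ?f (card {j\<in>J. j < c}) * ?IH"
      unfolding sum_placement_weight_new_column[OF Suc.prems c]
      using Suc.IH[of "J - {c}"] Suc.prems by simp
  qed
  also have "\<dots> = (\<Sum>c\<in>J. ?f (card {j\<in>J. j < c})) * ?IH"
    by (simp only: sum_distrib_right)
  also have "(\<Sum>c\<in>J. ?f (card {j\<in>J. j < c})) = sig (a^(2*n+1)) * sig (a^(2*n+2))"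
    using Suc.prems by (simp only: sum_over_ranks[of J ?f] sum_row_factors[OF a])
  finally show ?case by (simp add: mult_ac)
qed

lemma C_HT_eq_prod: "C_HT m a = (\<Prod>i<m. sig (a^(2*i+1)) * sig (a^(2*i+2)))"
proof (induction m)
  case 0 thus ?case by (simp add: C_HT_def)
next
  case (Suc m)
  have "C_HT (Suc m) a = C_HT m a * sig (a^(2*m+1)) * sig (a^(2*m+2))"
    unfolding C_HT_def by (simp add: prod.nat_ivl_Suc' mult_ac)
  thus ?case using Suc.IH by (simp add: mult_ac)
qed

section \<open>Expansion of the partition function\<close>

definition vertices :: "nat \<Rightarrow> (nat \<times> nat) set" where
  "vertices m = {1..2*m} \<times> {1..m}"

definition x_index :: "nat \<Rightarrow> nat \<Rightarrow> nat" where
  "x_index m r = min r (2*m+1-r)"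

definition is_turn :: "(nat \<Rightarrow> nat \<Rightarrow> bool) \<Rightarrow> nat \<times> nat \<Rightarrow> bool" where
  "is_turn h w \<longleftrightarrow> h (fst w) (snd w - 1) \<noteq> h (fst w) (snd w)"

text \<open>At a vertex with parameter \<open>X/Y\<close> the weight is expanded as
  \<open>\<Sum>e. coefficient * (X/Y)^(e - 1)\<close>, where \<open>e = 1\<close> at a turn (types 1, 2) and
  \<open>e \<in> {0, 2}\<close> otherwise; \<open>e = 2\<close> is the leading term in \<open>X\<close>.\<close>

definition expansion_exps :: "(nat \<Rightarrow> nat \<Rightarrow> bool) \<Rightarrow> nat \<times> nat \<Rightarrow> nat set" where
  "expansion_exps h w = (if is_turn h w then {1} else {0, 2})"

definition expansion_coeff ::
    "complex \<Rightarrow> (nat \<Rightarrow> nat \<Rightarrow> bool) \<times> (nat \<Rightarrow> nat \<Rightarrow> bool) \<Rightarrow> nat \<times> nat \<Rightarrow> nat \<Rightarrow> complex" where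
  "expansion_coeff a s w e = (if is_turn (fst s) w then sig (a^2)
     else if (fst s (fst w) (snd w - 1) = snd s (fst w - 1) (snd w)) = (e = 2) then a
     else - inverse a)"

definition expansion_monomial ::
    "nat \<Rightarrow> (nat \<Rightarrow> complex) \<Rightarrow> (nat \<Rightarrow> complex) \<Rightarrow> nat \<times> nat \<Rightarrow> nat \<Rightarrow> complex" where
  "expansion_monomial m x y w e =
     x (x_index m (fst w)) ^ e * y (snd w) ^ (2 - e) * inverse (x (x_index m (fst w))) * inverse (y (snd w))"

lemma vweight_expansion:
  assumes "n_in L R A B = 2" "X \<noteq> 0" "Y \<noteq> 0" "a \<noteq> 0"
  shows "vweight a (X * inverse Y) L R A B =
    (\<Sum>e\<in>(if L \<noteq> R then {1} else {0,2}).
       (if L \<noteq> R then sig (a^2) else if (L = A) = (e = 2) then a else - inverse a) *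
       (X^e * Y^(2-e) * inverse X * inverse Y))"
  using assms
  by (cases L; cases R; cases A; cases B)
    (simp_all add: n_in_def vweight_def sig_def field_simps power2_eq_square)

lemma x_index_range: "r \<in> {1..2*m} \<Longrightarrow> x_index m r \<in> {1..m}"
  unfolding x_index_def by auto

lemma x_index_row_pair: "i \<in> {1..m} \<Longrightarrow> x_index m i = i \<and> x_index m (2*m+1-i) = i"
  unfolding x_index_def by auto

lemma HT_statesD:
  assumes "(h, v) \<in> HT_states m"
  shows "\<And>r. r \<in> {1..2*m} \<Longrightarrow> h r 0" "\<And>j. j \<in> {1..m} \<Longrightarrow> v 0 j"
    "\<And>j. j \<in> {1..m} \<Longrightarrow> \<not> v (2*m) j" "\<And>r. r \<in> {1..m} \<Longrightarrow> h r m \<noteq> h (2*m+1-r) m"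
    "\<And>r j. \<not> (1 \<le> r \<and> r \<le> 2*m \<and> j \<le> m) \<Longrightarrow> \<not> h r j"
    "\<And>r j. \<not> (r \<le> 2*m \<and> 1 \<le> j \<and> j \<le> m) \<Longrightarrow> \<not> v r j"
    "\<And>r j. r \<in> {1..2*m} \<Longrightarrow> j \<in> {1..m} \<Longrightarrow> n_in (h r (j-1)) (h r j) (v (r-1) j) (v r j) = 2"
  using assms unfolding HT_states_def by auto

lemma finite_HT_states: "finite (HT_states m)"
proof -
  let ?B1 = "{1..2*m} \<times> {0..m}" and ?B2 = "{0..2*m} \<times> {1..m}"
  let ?f = "\<lambda>(h, v). ({(r, j)\<in>?B1. h r j}, {(r, j)\<in>?B2. v r j})"
  have "inj_on ?f (HT_states m)"
  proof (rule inj_onI)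
    fix p q assume p: "p \<in> HT_states m" and q: "q \<in> HT_states m" and e: "?f p = ?f q"
    obtain h v h' v' where pq: "p = (h, v)" "q = (h', v')" by (cases p, cases q) auto
    note hp = HT_statesD[OF p[unfolded pq(1)]] and hq = HT_statesD[OF q[unfolded pq(2)]]
    have "h r j = h' r j" for r j
      using e pq hp(5)[of r j] hq(5)[of r j] by (cases "(r, j) \<in> ?B1") (auto simp: set_eq_iff)
    moreover have "v r j = v' r j" for r j
      using e pq hp(6)[of r j] hq(6)[of r j] by (cases "(r, j) \<in> ?B2") (auto simp: set_eq_iff)
    ultimately show "p = q" using pq by (simp add: fun_eq_iff)
  qed
  moreover have "finite (?f ` HT_states m)"
    by (rule finite_subset[of _ "Pow ?B1 \<times> Pow ?B2"]) auto
  ultimately show ?thesis using finite_imageD by blast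
qed

lemma Z_HT_expansion:
  assumes a: "a \<noteq> 0" and xy: "\<forall>i\<in>{1..m}. x i \<noteq> 0 \<and> y i \<noteq> 0"
  shows "Z_HT m a x y = (\<Sum>s\<in>HT_states m. \<Sum>E\<in>PiE (vertices m) (expansion_exps (fst s)).
            \<Prod>w\<in>vertices m. expansion_coeff a s w (E w) * expansion_monomial m x y w (E w))"
  unfolding Z_HT_def
proof (rule sum.cong[OF refl])
  fix s assume s: "s \<in> HT_states m"
  obtain h v where hv: "s = (h, v)" by (cases s) auto
  have "(\<Prod>r\<in>{1..2*m}. \<Prod>j\<in>{1..m}.
        vweight a (x (min r (2*m+1-r)) * inverse (y j)) (h r (j-1)) (h r j) (v (r-1) j) (v r j)) =
      (\<Prod>(r, j)\<in>vertices m.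
        vweight a (x (x_index m r) * inverse (y j)) (h r (j-1)) (h r j) (v (r-1) j) (v r j))"
    unfolding vertices_def x_index_def by (simp add: prod.cartesian_product)
  also have "\<dots> = (\<Prod>w\<in>vertices m. \<Sum>e\<in>expansion_exps h w.
                     expansion_coeff a s w e * expansion_monomial m x y w e)"
  proof (rule prod.cong[OF refl])
    fix w assume w: "w \<in> vertices m"
    obtain r j where rj: "w = (r, j)" by (cases w) auto
    have r: "r \<in> {1..2*m}" and j: "j \<in> {1..m}" using w rj unfolding vertices_def by auto
    have "x (x_index m r) \<noteq> 0" "y j \<noteq> 0" using xy x_index_range[OF r] j by auto
    from vweight_expansion[OF HT_statesD(7)[OF s[unfolded hv] r j] this a]
    show "(case w of (r, j) \<Rightarrow>
            vweight a (x (x_index m r) * inverse (y j)) (h r (j-1)) (h r j) (v (r-1) j) (v r j)) =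
          (\<Sum>e\<in>expansion_exps h w. expansion_coeff a s w e * expansion_monomial m x y w e)"
      unfolding rj by (simp add: expansion_exps_def expansion_coeff_def expansion_monomial_def
          is_turn_def hv)
  qed
  also have "\<dots> = (\<Sum>E\<in>PiE (vertices m) (expansion_exps h).
                     \<Prod>w\<in>vertices m. expansion_coeff a s w (E w) * expansion_monomial m x y w (E w))"
    by (rule prod_sum_PiE) (auto simp: vertices_def expansion_exps_def)
  finally show "(case s of (h, v) \<Rightarrow> \<Prod>r\<in>{1..2*m}. \<Prod>j\<in>{1..m}.
        vweight a (x (min r (2*m+1-r)) * inverse (y j)) (h r (j-1)) (h r j) (v (r-1) j) (v r j)) =
      (\<Sum>E\<in>PiE (vertices m) (expansion_exps (fst s)).
        \<Prod>w\<in>vertices m. expansion_coeff a s w (E w) * expansion_monomial m x y w (E w))"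
    using hv by simp
qed

lemma n_in_2_straight: "n_in L R A B = 2 \<Longrightarrow> L = R \<Longrightarrow> A = B"
  by (cases L; cases R; cases A; cases B) (simp_all add: n_in_def)

lemma n_in_2_turn:
  "n_in L R A B = 2 \<Longrightarrow> L \<noteq> R \<Longrightarrow> (L \<and> \<not> R \<and> A \<and> \<not> B) \<or> (\<not> L \<and> R \<and> \<not> A \<and> B)"
  by (cases L; cases R; cases A; cases B) (simp_all add: n_in_def)

lemma column_has_turn:
  assumes s: "(h, v) \<in> HT_states m" and j: "j \<in> {1..m}"
  obtains r where "r \<in> {1..2*m}" "is_turn h (r, j)"
proof (rule ccontr)
  assume "\<not> thesis"
  hence no_turn: "\<forall>r\<in>{1..2*m}. \<not> is_turn h (r, j)" using that by blast
  have "v r j" if "r \<le> 2*m" for r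
    using that
  proof (induction r)
    case 0 thus ?case using HT_statesD(2)[OF s j] by simp
  next
    case (Suc r)
    have "n_in (h (Suc r) (j-1)) (h (Suc r) j) (v r j) (v (Suc r) j) = 2"
      using HT_statesD(7)[OF s, of "Suc r" j] Suc.prems j by simp
    thus ?case using n_in_2_straight Suc no_turn unfolding is_turn_def by force
  qed
  thus False using HT_statesD(3)[OF s j] by simp
qed

lemma row_without_turn:
  assumes s: "(h, v) \<in> HT_states m" and r: "r \<in> {1..2*m}"
    and no_turn: "\<forall>j\<in>{1..m}. \<not> is_turn h (r, j)"
  shows "h r m"
proof -
  have "h r j" if "j \<le> m" for j
    using that
  proof (induction j)
    case 0 thus ?case using HT_statesD(1)[OF s r] by simp
  next
    case (Suc j) thus ?case using no_turn unfolding is_turn_def by auto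
  qed
  thus ?thesis by simp
qed

lemma row_pair_has_turn:
  assumes s: "(h, v) \<in> HT_states m" and i: "i \<in> {1..m}"
  obtains w where "w \<in> vertices m" "x_index m (fst w) = i" "is_turn h w"
proof -
  have "\<exists>r\<in>{i, 2*m+1-i}. \<exists>j\<in>{1..m}. is_turn h (r, j)"
    using row_without_turn[OF s, of i] row_without_turn[OF s, of "2*m+1-i"] HT_statesD(4)[OF s i] i
    by force
  then obtain r j where r: "r \<in> {i, 2*m+1-i}" and j: "j \<in> {1..m}" and turn: "is_turn h (r, j)"
    by blast
  have "(r, j) \<in> vertices m" "x_index m r = i"
    using r j i x_index_row_pair[OF i] unfolding vertices_def by auto
  then show ?thesis using that turn by simp
qed

section \<open>Exponents and the degree bound\<close>

definition row_pair_vertices :: "nat \<Rightarrow> nat \<Rightarrow> (nat \<times> nat) set" where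
  "row_pair_vertices m i = {w\<in>vertices m. x_index m (fst w) = i}"

definition column_vertices :: "nat \<Rightarrow> nat \<Rightarrow> (nat \<times> nat) set" where
  "column_vertices m j = {w\<in>vertices m. snd w = j}"

text \<open>The normalising factor \<open>x i ^ (2m - 1)\<close> against the \<open>2m\<close> denominators of the row pair leaves
  the exponent \<open>(\<Sum> E) - 1\<close>; the truncated subtraction is harmless because every row pair contains
  a turn, where \<open>E = 1\<close>.\<close>

definition x_exponent :: "nat \<Rightarrow> (nat \<times> nat \<Rightarrow> nat) \<Rightarrow> nat \<Rightarrow> nat" where
  "x_exponent m E i = (\<Sum>w\<in>row_pair_vertices m i. E w) - 1"

definition y_exponent :: "nat \<Rightarrow> (nat \<times> nat \<Rightarrow> nat) \<Rightarrow> nat \<Rightarrow> nat" where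
  "y_exponent m E j = (\<Sum>w\<in>column_vertices m j. 2 - E w) - 1"

definition turns :: "nat \<Rightarrow> (nat \<Rightarrow> nat \<Rightarrow> bool) \<Rightarrow> (nat \<times> nat) set" where
  "turns m h = {w\<in>vertices m. is_turn h w}"

definition leading_choice :: "nat \<Rightarrow> (nat \<Rightarrow> nat \<Rightarrow> bool) \<Rightarrow> nat \<times> nat \<Rightarrow> nat" where
  "leading_choice m h = (\<lambda>w\<in>vertices m. if is_turn h w then 1 else 2)"

lemma finite_vertices [simp]: "finite (vertices m)"
  by (simp add: vertices_def)

lemma card_vertices: "card (vertices m) = 2*m*m"
  by (simp add: vertices_def card_cartesian_product)

lemma x_index_vertices: "(\<lambda>w. x_index m (fst w)) ` vertices m \<subseteq> {1..m}"
  unfolding vertices_def using x_index_range by auto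

lemma snd_vertices: "snd ` vertices m \<subseteq> {1..m}"
  unfolding vertices_def by auto

lemma card_row_pair_vertices:
  assumes i: "i \<in> {1..m}" shows "card (row_pair_vertices m i) = 2*m"
proof -
  have "row_pair_vertices m i = {i, 2*m+1-i} \<times> {1..m}"
    using i unfolding row_pair_vertices_def vertices_def x_index_def
    by (auto simp: min_def split: if_splits)
  moreover have "i \<noteq> 2*m+1-i" using i by auto
  ultimately show ?thesis by (simp add: card_cartesian_product)
qed

lemma card_column_vertices:
  assumes j: "j \<in> {1..m}" shows "card (column_vertices m j) = 2*m"
proof -
  have "column_vertices m j = {1..2*m} \<times> {j}" using j unfolding column_vertices_def vertices_def by auto
  thus ?thesis by (simp add: card_cartesian_product)
qed

lemma choice_at_turn:
  "E \<in> PiE (vertices m) (expansion_exps h) \<Longrightarrow> w \<in> vertices m \<Longrightarrow> is_turn h w \<Longrightarrow> E w = 1"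
  using PiE_mem[of E "vertices m" "expansion_exps h" w] unfolding expansion_exps_def by auto

lemma row_pair_sum_ge_1:
  assumes s: "(h, v) \<in> HT_states m" and E: "E \<in> PiE (vertices m) (expansion_exps h)"
    and i: "i \<in> {1..m}"
  shows "1 \<le> (\<Sum>w\<in>row_pair_vertices m i. E w)"
proof -
  obtain w where w: "w \<in> vertices m" "x_index m (fst w) = i" "is_turn h w"
    using row_pair_has_turn[OF s i] .
  then have "E w \<le> (\<Sum>w\<in>row_pair_vertices m i. E w)"
    unfolding row_pair_vertices_def by (intro member_le_sum) auto
  thus ?thesis using choice_at_turn[OF E w(1,3)] by simp
qed

lemma column_sum_ge_1:
  assumes s: "(h, v) \<in> HT_states m" and E: "E \<in> PiE (vertices m) (expansion_exps h)"
    and j: "j \<in> {1..m}"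
  shows "1 \<le> (\<Sum>w\<in>column_vertices m j. 2 - E w)"
proof -
  obtain r where r: "r \<in> {1..2*m}" "is_turn h (r, j)" using column_has_turn[OF s j] .
  have w: "(r, j) \<in> vertices m" using r j unfolding vertices_def by auto
  then have "2 - E (r, j) \<le> (\<Sum>w\<in>column_vertices m j. 2 - E w)"
    unfolding column_vertices_def by (intro member_le_sum[where f="\<lambda>w. 2 - E w"]) auto
  thus ?thesis using choice_at_turn[OF E w r(2)] by simp
qed

lemma sum_x_exponent:
  assumes s: "(h, v) \<in> HT_states m" and E: "E \<in> PiE (vertices m) (expansion_exps h)"
  shows "(\<Sum>i\<in>{1..m}. x_exponent m E i) = (\<Sum>w\<in>vertices m. E w) - m"
proof -
  have "(\<Sum>i\<in>{1..m}. x_exponent m E i) = (\<Sum>i\<in>{1..m}. \<Sum>w\<in>row_pair_vertices m i. E w) - (\<Sum>i\<in>{1..m}. 1)"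
    unfolding x_exponent_def using row_pair_sum_ge_1[OF s E] by (intro sum_subtractf_nat) auto
  also have "(\<Sum>i\<in>{1..m}. \<Sum>w\<in>row_pair_vertices m i. E w) = (\<Sum>w\<in>vertices m. E w)"
    unfolding row_pair_vertices_def using sum.group[OF finite_vertices _ x_index_vertices] by simp
  finally show ?thesis by simp
qed

lemma sum_leading_choice:
  "(\<Sum>w\<in>vertices m. leading_choice m h w) = 2 * card (vertices m) - card (turns m h)"
proof -
  have "(\<Sum>w\<in>vertices m. leading_choice m h w) = (\<Sum>w\<in>vertices m. if is_turn h w then 1 else 2)"
    unfolding leading_choice_def by (rule sum.cong) auto
  thus ?thesis using sum_if_1_2[OF finite_vertices] unfolding turns_def by simp
qed

lemma choice_le_leading_choice:
  "E \<in> PiE (vertices m) (expansion_exps h) \<Longrightarrow> w \<in> vertices m \<Longrightarrow> E w \<le> leading_choice m h w"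
  using PiE_mem[of E "vertices m" "expansion_exps h" w]
  unfolding leading_choice_def expansion_exps_def by (auto split: if_splits)

lemma card_turns_in_column_ge_1:
  assumes s: "(h, v) \<in> HT_states m" and j: "j \<in> {1..m}"
  shows "1 \<le> card {w\<in>turns m h. snd w = j}"
proof -
  obtain r where "r \<in> {1..2*m}" "is_turn h (r, j)" using column_has_turn[OF s j] .
  then have "(r, j) \<in> {w\<in>turns m h. snd w = j}" using j unfolding turns_def vertices_def by auto
  moreover have "finite {w\<in>turns m h. snd w = j}" by (simp add: turns_def)
  ultimately show ?thesis using card_mono[of _ "{(r, j)}"] by simp
qed

lemma card_turns_in_row_pair_ge_1:
  assumes s: "(h, v) \<in> HT_states m" and i: "i \<in> {1..m}"
  shows "1 \<le> card {w\<in>turns m h. x_index m (fst w) = i}"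
proof -
  obtain w where "w \<in> vertices m" "x_index m (fst w) = i" "is_turn h w"
    using row_pair_has_turn[OF s i] .
  then have "w \<in> {w\<in>turns m h. x_index m (fst w) = i}" unfolding turns_def by auto
  moreover have "finite {w\<in>turns m h. x_index m (fst w) = i}" by (simp add: turns_def)
  ultimately show ?thesis using card_mono[of _ "{w}"] by simp
qed

lemma card_turns_by_columns: "card (turns m h) = (\<Sum>j\<in>{1..m}. card {w\<in>turns m h. snd w = j})"
  using snd_vertices by (intro card_eq_sum_card_fibres) (auto simp: turns_def)

lemma card_turns_by_row_pairs:
  "card (turns m h) = (\<Sum>i\<in>{1..m}. card {w\<in>turns m h. x_index m (fst w) = i})"
  using x_index_vertices by (intro card_eq_sum_card_fibres) (auto simp: turns_def)

lemma card_turns_ge: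
  assumes "(h, v) \<in> HT_states m"
  shows "m \<le> card (turns m h)"
  using card_le_sum_of_ge_1[of "{1..m}"] card_turns_in_column_ge_1[OF assms]
  by (simp add: card_turns_by_columns)

lemma x_degree_le:
  assumes s: "(h, v) \<in> HT_states m" and E: "E \<in> PiE (vertices m) (expansion_exps h)"
  shows "(\<Sum>i\<in>{1..m}. x_exponent m E i) \<le> 2*m*(2*m-1)"
    and "(\<Sum>i\<in>{1..m}. x_exponent m E i) = 2*m*(2*m-1) \<Longrightarrow>
           E = leading_choice m h \<and> card (turns m h) = m"
proof -
  have le: "(\<Sum>w\<in>vertices m. E w) \<le> (\<Sum>w\<in>vertices m. leading_choice m h w)"
    using choice_le_leading_choice[OF E] by (intro sum_mono) auto
  have turns_le: "card (turns m h) \<le> 2*m*m"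
    using card_mono[of "vertices m" "turns m h"] card_vertices unfolding turns_def by auto
  have top: "2*m*(2*m-1) = 2*(2*m*m) - m - m" by (simp add: algebra_simps)
  note facts = sum_x_exponent[OF s E] le sum_leading_choice[of m h] card_turns_ge[OF s]
    card_vertices[of m] top
  show "(\<Sum>i\<in>{1..m}. x_exponent m E i) \<le> 2*m*(2*m-1)"
    using facts by linarith
  assume eq: "(\<Sum>i\<in>{1..m}. x_exponent m E i) = 2*m*(2*m-1)"
  have "m \<le> m*m" by simp
  hence card_turns: "card (turns m h) = m"
    and sum_eq: "(\<Sum>w\<in>vertices m. E w) = (\<Sum>w\<in>vertices m. leading_choice m h w)"
    using facts eq turns_le by linarith+
  have "E w = leading_choice m h w" if w: "w \<in> vertices m" for w
  proof (rule ccontr)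
    assume "E w \<noteq> leading_choice m h w"
    hence "E w < leading_choice m h w" using choice_le_leading_choice[OF E w] by simp
    hence "(\<Sum>w\<in>vertices m. E w) < (\<Sum>w\<in>vertices m. leading_choice m h w)"
      using choice_le_leading_choice[OF E] w by (intro sum_strict_mono_ex1) auto
    thus False using sum_eq by simp
  qed
  moreover have "E w = leading_choice m h w" if "w \<notin> vertices m" for w
    using PiE_arb[OF E that] that unfolding leading_choice_def by simp
  ultimately show "E = leading_choice m h \<and> card (turns m h) = m"
    using card_turns by (auto simp: fun_eq_iff)
qed

lemma one_turn_per_column:
  assumes s: "(h, v) \<in> HT_states m" and c: "card (turns m h) = m" and j: "j \<in> {1..m}"
  shows "card {w\<in>turns m h. snd w = j} = 1"
proof (rule sum_eq_card_imp_eq_1[of "{1..m}" "\<lambda>j. card {w\<in>turns m h. snd w = j}"])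
  show "\<forall>j\<in>{1..m}. 1 \<le> card {w\<in>turns m h. snd w = j}"
    using card_turns_in_column_ge_1[OF s] by blast
qed (use c j card_turns_by_columns[of m h] in auto)

lemma one_turn_per_row_pair:
  assumes s: "(h, v) \<in> HT_states m" and c: "card (turns m h) = m" and i: "i \<in> {1..m}"
  shows "card {w\<in>turns m h. x_index m (fst w) = i} = 1"
proof (rule sum_eq_card_imp_eq_1[of "{1..m}" "\<lambda>i. card {w\<in>turns m h. x_index m (fst w) = i}"])
  show "\<forall>i\<in>{1..m}. 1 \<le> card {w\<in>turns m h. x_index m (fst w) = i}"
    using card_turns_in_row_pair_ge_1[OF s] by blast
qed (use c i card_turns_by_row_pairs[of m h] in auto)

lemma leading_exponents:
  assumes s: "(h, v) \<in> HT_states m" and c: "card (turns m h) = m"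
  shows "i \<in> {1..m} \<Longrightarrow> x_exponent m (leading_choice m h) i = 2*(2*m-1)"
    and "j \<in> {1..m} \<Longrightarrow> y_exponent m (leading_choice m h) j = 0"
proof -
  assume i: "i \<in> {1..m}"
  have "(\<Sum>w\<in>row_pair_vertices m i. leading_choice m h w) =
        (\<Sum>w\<in>row_pair_vertices m i. if is_turn h w then 1 else 2)"
    unfolding leading_choice_def row_pair_vertices_def by (rule sum.cong) auto
  also have "\<dots> = 2 * card (row_pair_vertices m i) - card {w\<in>turns m h. x_index m (fst w) = i}"
    unfolding turns_def row_pair_vertices_def
    by (simp add: sum_if_1_2 conj_ac)
  finally show "x_exponent m (leading_choice m h) i = 2*(2*m-1)"
    unfolding x_exponent_def using one_turn_per_row_pair[OF s c i] card_row_pair_vertices[OF i]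
    by simp
next
  assume j: "j \<in> {1..m}"
  have "(\<Sum>w\<in>column_vertices m j. 2 - leading_choice m h w) =
        (\<Sum>w\<in>column_vertices m j. if is_turn h w then 1 else 0)"
    unfolding leading_choice_def column_vertices_def by (rule sum.cong) auto
  also have "\<dots> = card {w\<in>turns m h. snd w = j}"
    unfolding turns_def column_vertices_def by (simp add: sum.If_cases Int_def conj_ac)
  finally show "y_exponent m (leading_choice m h) j = 0"
    unfolding y_exponent_def using one_turn_per_column[OF s c j] by simp
qed

lemma prod_expansion_monomial:
  "(\<Prod>w\<in>vertices m. expansion_monomial m x y w (E w)) =
   (\<Prod>i\<in>{1..m}. x i ^ (\<Sum>w\<in>row_pair_vertices m i. E w) * inverse (x i) ^ (2*m)) *
   (\<Prod>j\<in>{1..m}. y j ^ (\<Sum>w\<in>column_vertices m j. 2 - E w) * inverse (y j) ^ (2*m))"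
proof -
  let ?X = "\<lambda>w. x (x_index m (fst w))" and ?Y = "\<lambda>w. y (snd w)"
  have group_x: "(\<Prod>w\<in>vertices m. f (x_index m (fst w)) ^ p w) =
      (\<Prod>i\<in>{1..m}. f i ^ (\<Sum>w\<in>row_pair_vertices m i. p w))" for f :: "nat \<Rightarrow> complex" and p
    unfolding row_pair_vertices_def by (rule prod_power_fibres[OF _ _ x_index_vertices]) auto
  have group_y: "(\<Prod>w\<in>vertices m. f (snd w) ^ p w) =
      (\<Prod>j\<in>{1..m}. f j ^ (\<Sum>w\<in>column_vertices m j. p w))" for f :: "nat \<Rightarrow> complex" and p
    unfolding column_vertices_def by (rule prod_power_fibres[OF _ _ snd_vertices]) auto
  have "(\<Prod>w\<in>vertices m. expansion_monomial m x y w (E w)) =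
     (\<Prod>w\<in>vertices m. ?X w ^ E w) * (\<Prod>w\<in>vertices m. inverse (?X w) ^ 1) *
     ((\<Prod>w\<in>vertices m. ?Y w ^ (2 - E w)) * (\<Prod>w\<in>vertices m. inverse (?Y w) ^ 1))"
    unfolding expansion_monomial_def by (simp add: prod.distrib mult_ac)
  also have "\<dots> = (\<Prod>i\<in>{1..m}. x i ^ (\<Sum>w\<in>row_pair_vertices m i. E w)) *
      (\<Prod>i\<in>{1..m}. inverse (x i) ^ (2*m)) *
      ((\<Prod>j\<in>{1..m}. y j ^ (\<Sum>w\<in>column_vertices m j. 2 - E w)) *
       (\<Prod>j\<in>{1..m}. inverse (y j) ^ (2*m)))"
    unfolding group_x[of x] group_x[of "\<lambda>i. inverse (x i)"] group_y[of y]
      group_y[of "\<lambda>j. inverse (y j)"]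
    by (simp add: card_row_pair_vertices card_column_vertices)
  finally show ?thesis by (simp add: prod.distrib)
qed

lemma normalised_expansion_term:
  assumes m: "1 \<le> m" and s: "(h, v) \<in> HT_states m"
    and E: "E \<in> PiE (vertices m) (expansion_exps h)"
    and xy: "\<forall>i\<in>{1..m}. x i \<noteq> 0 \<and> y i \<noteq> 0"
  shows "(\<Prod>i\<in>{1..m}. x i ^ (2*m-1) * y i ^ (2*m-1)) *
           (\<Prod>w\<in>vertices m. expansion_coeff a (h, v) w (E w) * expansion_monomial m x y w (E w)) =
         (\<Prod>w\<in>vertices m. expansion_coeff a (h, v) w (E w)) *
           (\<Prod>i\<in>{1..m}. x i ^ x_exponent m E i * y i ^ y_exponent m E i)"
proof -
  let ?xs = "\<lambda>i. x i ^ (\<Sum>w\<in>row_pair_vertices m i. E w) * inverse (x i) ^ (2*m)"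
  let ?ys = "\<lambda>j. y j ^ (\<Sum>w\<in>column_vertices m j. 2 - E w) * inverse (y j) ^ (2*m)"
  have "x i ^ (2*m-1) * ?xs i = x i ^ x_exponent m E i" if i: "i \<in> {1..m}" for i
    unfolding x_exponent_def mult.assoc[symmetric]
    by (intro power_shift_cancel) (use xy row_pair_sum_ge_1[OF s E i] m i in auto)
  then have x_part: "(\<Prod>i\<in>{1..m}. x i ^ (2*m-1)) * (\<Prod>i\<in>{1..m}. ?xs i) =
      (\<Prod>i\<in>{1..m}. x i ^ x_exponent m E i)"
    unfolding prod.distrib[symmetric] by (rule prod.cong[OF refl])
  have "y j ^ (2*m-1) * ?ys j = y j ^ y_exponent m E j" if j: "j \<in> {1..m}" for j
    unfolding y_exponent_def mult.assoc[symmetric]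
    by (intro power_shift_cancel) (use xy column_sum_ge_1[OF s E j] m j in auto)
  then have y_part: "(\<Prod>j\<in>{1..m}. y j ^ (2*m-1)) * (\<Prod>j\<in>{1..m}. ?ys j) =
      (\<Prod>j\<in>{1..m}. y j ^ y_exponent m E j)"
    unfolding prod.distrib[symmetric] by (rule prod.cong[OF refl])
  have "(\<Prod>i\<in>{1..m}. x i ^ (2*m-1) * y i ^ (2*m-1)) *
          (\<Prod>w\<in>vertices m. expansion_coeff a (h, v) w (E w) * expansion_monomial m x y w (E w)) =
        (\<Prod>w\<in>vertices m. expansion_coeff a (h, v) w (E w)) *
          (((\<Prod>i\<in>{1..m}. x i ^ (2*m-1)) * (\<Prod>i\<in>{1..m}. ?xs i)) *
           ((\<Prod>j\<in>{1..m}. y j ^ (2*m-1)) * (\<Prod>j\<in>{1..m}. ?ys j)))"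
    unfolding prod.distrib prod_expansion_monomial by (simp only: mult_ac)
  also have "\<dots> = (\<Prod>w\<in>vertices m. expansion_coeff a (h, v) w (E w)) *
           (\<Prod>i\<in>{1..m}. x i ^ x_exponent m E i * y i ^ y_exponent m E i)"
    by (simp only: x_part y_part) (simp only: prod.distrib)
  finally show ?thesis .
qed

section \<open>States with one turn per column\<close>

definition placement_state ::
    "nat \<Rightarrow> (nat \<Rightarrow> nat) \<Rightarrow> (nat \<Rightarrow> nat \<Rightarrow> bool) \<times> (nat \<Rightarrow> nat \<Rightarrow> bool)" where
  "placement_state m \<rho> =
     (\<lambda>r j. 1 \<le> r \<and> r \<le> 2*m \<and> j \<le> m \<and> (\<forall>c\<in>{1..m}. c \<le> j \<longrightarrow> \<rho> c \<noteq> r),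
      \<lambda>r j. r \<le> 2*m \<and> 1 \<le> j \<and> j \<le> m \<and> r < \<rho> j)"

lemma central_rows_m_m: "central_rows m m = {1..2*m}"
  unfolding central_rows_def by auto

lemma ht_placementsD:
  assumes "\<rho> \<in> ht_placements m m {1..m}"
  shows "\<And>j. j \<in> {1..m} \<Longrightarrow> \<rho> j \<in> {1..2*m}" "inj_on \<rho> {1..m}"
    "\<And>i j. i \<in> {1..m} \<Longrightarrow> j \<in> {1..m} \<Longrightarrow> \<rho> i + \<rho> j \<noteq> 2*m+1"
    "\<And>j. j \<notin> {1..m} \<Longrightarrow> \<rho> j = 0"
  using assms unfolding ht_placements_def central_rows_m_m by auto

lemma unvisited_before_column:
  fixes j m :: nat
  assumes "j \<in> {1..m}" "\<rho> j \<noteq> r"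
  shows "(\<forall>c\<in>{1..m}. c \<le> j - 1 \<longrightarrow> \<rho> c \<noteq> r) = (\<forall>c\<in>{1..m}. c \<le> j \<longrightarrow> \<rho> c \<noteq> r)"
proof -
  have "c \<le> j - 1 \<longleftrightarrow> c \<le> j \<and> c \<noteq> j" for c using assms(1) by (cases j) auto
  then show ?thesis using assms(2) by blast
qed

lemma is_turn_placement_state:
  assumes \<rho>: "\<rho> \<in> ht_placements m m {1..m}" and w: "(r, j) \<in> vertices m"
  shows "is_turn (fst (placement_state m \<rho>)) (r, j) \<longleftrightarrow> \<rho> j = r"
proof (cases "\<rho> j = r")
  case True
  have "\<rho> c \<noteq> r" if "c \<in> {1..m}" "c \<le> j - 1" for c
    using inj_onD[OF ht_placementsD(2)[OF \<rho>], of c j] that True w by (auto simp: vertices_def)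
  thus ?thesis using True w unfolding is_turn_def placement_state_def vertices_def by auto
next
  case False
  thus ?thesis using w unvisited_before_column[of j m \<rho> r]
    unfolding is_turn_def placement_state_def vertices_def by auto
qed

lemma placement_state_u_turn:
  assumes \<rho>: "\<rho> \<in> ht_placements m m {1..m}" and r: "r \<in> {1..m}"
  shows "fst (placement_state m \<rho>) r m \<noteq> fst (placement_state m \<rho>) (2*m+1-r) m"
proof -
  note \<rho>D = ht_placementsD[OF \<rho>]
  have "r \<in> \<rho> ` {1..m} \<or> 2*m+1-r \<in> \<rho> ` {1..m}"
    by (rule mem_or_reflection_mem[of _ m m])
      (use \<rho>D r card_image[OF \<rho>D(2)] in \<open>auto simp: image_subset_iff mult_2\<close>)
  moreover have "\<not> (r \<in> \<rho> ` {1..m} \<and> 2*m+1-r \<in> \<rho> ` {1..m})"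
  proof
    assume "r \<in> \<rho> ` {1..m} \<and> 2*m+1-r \<in> \<rho> ` {1..m}"
    then obtain i j where "i \<in> {1..m}" "j \<in> {1..m}" "\<rho> i = r" "\<rho> j = 2*m+1-r" by auto
    then show False using \<rho>D(3)[of i j] r by auto
  qed
  moreover have "fst (placement_state m \<rho>) r' m \<longleftrightarrow> r' \<notin> \<rho> ` {1..m}" if "r' \<in> {1..2*m}" for r'
    using that unfolding placement_state_def by auto
  moreover have "r \<in> {1..2*m}" "2*m+1-r \<in> {1..2*m}" using r by auto
  ultimately show ?thesis by blast
qed

lemma placement_state_in_HT_states:
  assumes \<rho>: "\<rho> \<in> ht_placements m m {1..m}"
  shows "placement_state m \<rho> \<in> HT_states m"
proof -
  obtain h v where hv: "placement_state m \<rho> = (h, v)" by (cases "placement_state m \<rho>") auto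
  have h: "h = (\<lambda>r j. 1 \<le> r \<and> r \<le> 2*m \<and> j \<le> m \<and> (\<forall>c\<in>{1..m}. c \<le> j \<longrightarrow> \<rho> c \<noteq> r))"
    and v: "v = (\<lambda>r j. r \<le> 2*m \<and> 1 \<le> j \<and> j \<le> m \<and> r < \<rho> j)"
    using hv unfolding placement_state_def by auto
  have range: "\<forall>j\<in>{1..m}. 0 < \<rho> j \<and> \<rho> j \<le> 2*m" using ht_placementsD(1)[OF \<rho>] by fastforce
  have vertex: "n_in (h r (j-1)) (h r j) (v (r-1) j) (v r j) = 2"
    if r: "r \<in> {1..2*m}" and j: "j \<in> {1..m}" for r j
  proof -
    have turn: "(h r (j-1) \<noteq> h r j) = (\<rho> j = r)"
      using is_turn_placement_state[OF \<rho>, of r j] hv r j unfolding is_turn_def vertices_def by simp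
    show ?thesis
    proof (cases "\<rho> j = r")
      case True
      then show ?thesis using turn r j unfolding h v n_in_def by auto
    next
      case False
      then have "v (r-1) j = v r j" using r j range unfolding v by auto
      then show ?thesis using turn False unfolding n_in_def by auto
    qed
  qed
  show ?thesis
    unfolding hv HT_states_def using placement_state_u_turn[OF \<rho>] vertex range hv
    unfolding h v by auto
qed

lemma card_turns_placement_state:
  assumes \<rho>: "\<rho> \<in> ht_placements m m {1..m}"
  shows "card (turns m (fst (placement_state m \<rho>))) = m"
proof -
  have "turns m (fst (placement_state m \<rho>)) = (\<lambda>j. (\<rho> j, j)) ` {1..m}"
    using is_turn_placement_state[OF \<rho>] ht_placementsD(1)[OF \<rho>]
    unfolding turns_def by (auto simp: vertices_def)
  moreover have "inj_on (\<lambda>j. (\<rho> j, j)) {1..m}" by (auto simp: inj_on_def)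
  ultimately show ?thesis by (simp add: card_image)
qed

lemma inj_on_placement_state: "inj_on (placement_state m) (ht_placements m m {1..m})"
proof (rule inj_onI)
  fix \<rho>1 \<rho>2 assume 1: "\<rho>1 \<in> ht_placements m m {1..m}" and 2: "\<rho>2 \<in> ht_placements m m {1..m}"
    and e: "placement_state m \<rho>1 = placement_state m \<rho>2"
  have v: "(r \<le> 2*m \<and> 1 \<le> j \<and> j \<le> m \<and> r < \<rho>1 j) = (r \<le> 2*m \<and> 1 \<le> j \<and> j \<le> m \<and> r < \<rho>2 j)"
    for r j using arg_cong[OF e, of snd] unfolding placement_state_def by (simp add: fun_eq_iff)
  have "\<rho>1 j = \<rho>2 j" for j
  proof (cases "j \<in> {1..m}")
    case True
    then show ?thesis
      using v[of "\<rho>1 j" j] v[of "\<rho>2 j" j] ht_placementsD(1)[OF 1 True] ht_placementsD(1)[OF 2 True]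
      by (auto simp: linorder_neq_iff)
  next
    case False
    then show ?thesis using ht_placementsD(4)[OF 1] ht_placementsD(4)[OF 2] by simp
  qed
  then show "\<rho>1 = \<rho>2" ..
qed

lemma leading_coeff_placement_state:
  assumes \<rho>: "\<rho> \<in> ht_placements m m {1..m}"
  shows "(\<Prod>w\<in>vertices m. expansion_coeff a (placement_state m \<rho>) w
            (leading_choice m (fst (placement_state m \<rho>)) w)) =
         placement_weight a m m {1..m} \<rho>"
proof -
  let ?s = "placement_state m \<rho>"
  have "(\<Prod>w\<in>vertices m. expansion_coeff a ?s w (leading_choice m (fst ?s) w)) =
        (\<Prod>r\<in>{1..2*m}. \<Prod>j\<in>{1..m}. expansion_coeff a ?s (r, j) (leading_choice m (fst ?s) (r, j)))"
    unfolding vertices_def by (simp add: prod.cartesian_product)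
  also have "\<dots> = (\<Prod>j\<in>{1..m}. \<Prod>r\<in>{1..2*m}.
                     expansion_coeff a ?s (r, j) (leading_choice m (fst ?s) (r, j)))"
    by (rule prod.swap)
  also have "\<dots> = (\<Prod>j\<in>{1..m}. \<Prod>r\<in>{1..2*m}. leading_weight a {1..m} \<rho> r j)"
  proof (intro prod.cong refl)
    fix j r assume j: "j \<in> {1..m}" and r: "r \<in> {1..2*m}"
    have w: "(r, j) \<in> vertices m" using r j unfolding vertices_def by auto
    note turn = is_turn_placement_state[OF \<rho> w]
    show "expansion_coeff a ?s (r, j) (leading_choice m (fst ?s) (r, j)) = leading_weight a {1..m} \<rho> r j"
    proof (cases "\<rho> j = r")
      case True
      then show ?thesis using turn unfolding expansion_coeff_def leading_weight_def by simp
    next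
      case False
      have "leading_choice m (fst ?s) (r, j) = 2" using w turn False unfolding leading_choice_def by simp
      moreover have "fst ?s r (j - 1) = (\<forall>c\<in>{1..m}. c \<le> j \<longrightarrow> \<rho> c \<noteq> r)"
        using r j unvisited_before_column[of j m \<rho> r] False unfolding placement_state_def by auto
      moreover have "snd ?s (r - 1) j = (r < \<rho> j)"
        using False r j ht_placementsD(1)[OF \<rho> j] unfolding placement_state_def by auto
      ultimately show ?thesis
        using turn False unfolding expansion_coeff_def leading_weight_def by simp
    qed
  qed
  finally show ?thesis unfolding placement_weight_def central_rows_m_m .
qed

lemma unique_turn_in_column:
  assumes s: "(h, v) \<in> HT_states m" and c: "card (turns m h) = m" and j: "j \<in> {1..m}"
  shows "\<exists>!r. r \<in> {1..2*m} \<and> is_turn h (r, j)"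
proof -
  obtain w where w: "{w\<in>turns m h. snd w = j} = {w}"
    using one_turn_per_column[OF s c j] by (rule card_1_singletonE)
  have mem: "(r, j) \<in> {w\<in>turns m h. snd w = j} \<longleftrightarrow> r \<in> {1..2*m} \<and> is_turn h (r, j)" for r
    using j unfolding turns_def vertices_def by auto
  have "w = (fst w, j)" using w by (metis (mono_tags) mem_Collect_eq prod.collapse singletonI)
  show ?thesis
  proof (rule ex1I[of _ "fst w"])
    show "fst w \<in> {1..2*m} \<and> is_turn h (fst w, j)"
      using mem[of "fst w"] w \<open>w = (fst w, j)\<close> by simp
    show "r = fst w" if "r \<in> {1..2*m} \<and> is_turn h (r, j)" for r
      using mem[of r] that w by auto
  qed
qed

lemma column_at_turn:
  assumes s: "(h, v) \<in> HT_states m" and j: "j \<in> {1..m}" and r0: "r0 \<in> {1..2*m}"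
    and turn_iff: "\<forall>r\<in>{1..2*m}. is_turn h (r, j) \<longleftrightarrow> r = r0"
  shows "\<forall>r\<le>2*m. v r j \<longleftrightarrow> r < r0" and "h r0 (j-1) \<and> \<not> h r0 j"
proof -
  show col: "\<forall>r\<le>2*m. v r j \<longleftrightarrow> r < r0"
  proof (intro allI impI)
    fix r assume "r \<le> 2*m"
    then show "v r j \<longleftrightarrow> r < r0"
    proof (induction r)
      case 0 thus ?case using HT_statesD(2)[OF s j] r0 by simp
    next
      case (Suc r)
      have n: "n_in (h (Suc r) (j-1)) (h (Suc r) j) (v r j) (v (Suc r) j) = 2"
        using HT_statesD(7)[OF s, of "Suc r" j] Suc.prems j by simp
      show ?case
      proof (cases "Suc r = r0")
        case True
        then have "h (Suc r) (j-1) \<noteq> h (Suc r) j" using turn_iff r0 unfolding is_turn_def by auto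
        then show ?thesis using n_in_2_turn[OF n] Suc True by auto
      next
        case False
        then have "h (Suc r) (j-1) = h (Suc r) j" using turn_iff Suc.prems unfolding is_turn_def by auto
        then show ?thesis using n_in_2_straight[OF n] Suc False by auto
      qed
    qed
  qed
  have n: "n_in (h r0 (j-1)) (h r0 j) (v (r0 - 1) j) (v r0 j) = 2"
    using HT_statesD(7)[OF s r0 j] .
  have "h r0 (j-1) \<noteq> h r0 j" using turn_iff r0 unfolding is_turn_def by auto
  moreover have "v (r0 - 1) j" using col r0 by auto
  ultimately show "h r0 (j-1) \<and> \<not> h r0 j" using n_in_2_turn[OF n] by auto
qed

lemma row_through_turns:
  assumes s: "(h, v) \<in> HT_states m" and r: "r \<in> {1..2*m}"
    and range: "\<forall>j\<in>{1..m}. \<rho> j \<in> {1..2*m}"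
    and turn_iff: "\<forall>j\<in>{1..m}. \<forall>r\<in>{1..2*m}. is_turn h (r, j) \<longleftrightarrow> r = \<rho> j"
  shows "j \<le> m \<Longrightarrow> h r j \<longleftrightarrow> (\<forall>c\<in>{1..m}. c \<le> j \<longrightarrow> \<rho> c \<noteq> r)"
proof (induction j)
  case 0 thus ?case using HT_statesD(1)[OF s r] by simp
next
  case (Suc j)
  have j: "Suc j \<in> {1..m}" using Suc.prems by simp
  show ?case
  proof (cases "\<rho> (Suc j) = r")
    case True
    then show ?thesis using column_at_turn(2)[OF s j] range turn_iff j by auto
  next
    case False
    then have "\<not> is_turn h (r, Suc j)" using turn_iff[rule_format, OF j r] by simp
    then have "h r j = h r (Suc j)" unfolding is_turn_def by simp
    then show ?thesis using Suc False by (auto simp: le_Suc_eq)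
  qed
qed

lemma turn_rows_in_ht_placements:
  assumes s: "(h, v) \<in> HT_states m"
    and range: "\<forall>j\<in>{1..m}. \<rho> j \<in> {1..2*m}"
    and turn_iff: "\<forall>j\<in>{1..m}. \<forall>r\<in>{1..2*m}. is_turn h (r, j) \<longleftrightarrow> r = \<rho> j"
    and zero: "\<forall>j. j \<notin> {1..m} \<longrightarrow> \<rho> j = 0"
  shows "\<rho> \<in> ht_placements m m {1..m}"
proof -
  note row = row_through_turns[OF s _ range turn_iff]
  have inj: "inj_on \<rho> {1..m}"
  proof (rule ccontr)
    assume "\<not> inj_on \<rho> {1..m}"
    then obtain c1 c2 where c: "c1 \<in> {1..m}" "c2 \<in> {1..m}" "\<rho> c1 = \<rho> c2" "c1 < c2"
      unfolding inj_on_def by (metis linorder_neqE_nat)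
    have "h (\<rho> c2) (c2 - 1)" using column_at_turn(2)[OF s c(2)] range turn_iff c(2) by auto
    then have "\<forall>c\<in>{1..m}. c \<le> c2 - 1 \<longrightarrow> \<rho> c \<noteq> \<rho> c2"
      using row[of "\<rho> c2" "c2 - 1"] range c(2) by auto
    then show False using c by auto
  qed
  have no_pair: "\<rho> i + \<rho> j \<noteq> 2*m+1" if i: "i \<in> {1..m}" and j: "j \<in> {1..m}" for i j
  proof
    assume e: "\<rho> i + \<rho> j = 2*m+1"
    have "\<not> h (\<rho> k) m" if "k \<in> {1..m}" for k
      using row[of "\<rho> k" m] range that by auto
    moreover have "h (\<rho> i) m \<noteq> h (\<rho> j) m"
    proof (cases "\<rho> i \<le> m")
      case True
      then have "\<rho> j = 2*m+1 - \<rho> i" using e by simp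
      then show ?thesis using HT_statesD(4)[OF s, of "\<rho> i"] True range i by simp
    next
      case False
      then have "\<rho> j \<le> m" "\<rho> i = 2*m+1 - \<rho> j" using e by auto
      then show ?thesis using HT_statesD(4)[OF s, of "\<rho> j"] range j by simp
    qed
    ultimately show False using i j by blast
  qed
  show ?thesis
    unfolding ht_placements_def central_rows_m_m using range inj no_pair zero by auto
qed

lemma turn_rows_placement_state:
  assumes s: "(h, v) \<in> HT_states m"
    and range: "\<forall>j\<in>{1..m}. \<rho> j \<in> {1..2*m}"
    and turn_iff: "\<forall>j\<in>{1..m}. \<forall>r\<in>{1..2*m}. is_turn h (r, j) \<longleftrightarrow> r = \<rho> j"
  shows "(h, v) = placement_state m \<rho>"
proof -
  have h: "h r j = fst (placement_state m \<rho>) r j" for r j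
  proof (cases "1 \<le> r \<and> r \<le> 2*m \<and> j \<le> m")
    case True
    then show ?thesis
      using row_through_turns[OF s _ range turn_iff, of r j] unfolding placement_state_def by auto
  next
    case False
    then show ?thesis using HT_statesD(5)[OF s] unfolding placement_state_def by auto
  qed
  have v: "v r j = snd (placement_state m \<rho>) r j" for r j
  proof (cases "r \<le> 2*m \<and> 1 \<le> j \<and> j \<le> m")
    case True
    then have "j \<in> {1..m}" by simp
    then show ?thesis
      using column_at_turn(1)[OF s _ _ ] range turn_iff True unfolding placement_state_def by auto
  next
    case False
    then show ?thesis using HT_statesD(6)[OF s] unfolding placement_state_def by auto
  qed
  show ?thesis using h v by (simp add: prod_eq_iff fun_eq_iff)
qed

lemma leading_state_is_placement_state:
  assumes s: "(h, v) \<in> HT_states m" and c: "card (turns m h) = m"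
  obtains \<rho> where "\<rho> \<in> ht_placements m m {1..m}" "(h, v) = placement_state m \<rho>"
proof -
  define \<rho> where "\<rho> j = (if j \<in> {1..m} then THE r. r \<in> {1..2*m} \<and> is_turn h (r, j) else 0)" for j
  have \<rho>_turn: "\<rho> j \<in> {1..2*m} \<and> is_turn h (\<rho> j, j)" if j: "j \<in> {1..m}" for j
    using theI'[OF unique_turn_in_column[OF s c j]] j unfolding \<rho>_def by simp
  have range: "\<forall>j\<in>{1..m}. \<rho> j \<in> {1..2*m}" using \<rho>_turn by blast
  have turn_iff: "\<forall>j\<in>{1..m}. \<forall>r\<in>{1..2*m}. is_turn h (r, j) \<longleftrightarrow> r = \<rho> j"
    using unique_turn_in_column[OF s c] \<rho>_turn by blast
  have "\<forall>j. j \<notin> {1..m} \<longrightarrow> \<rho> j = 0" unfolding \<rho>_def by simp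
  then show ?thesis
    using that turn_rows_in_ht_placements[OF s range turn_iff] turn_rows_placement_state[OF s range turn_iff]
    by blast
qed

section \<open>The leading part of the normalised partition function\<close>

definition expansion_terms ::
    "nat \<Rightarrow> (((nat \<Rightarrow> nat \<Rightarrow> bool) \<times> (nat \<Rightarrow> nat \<Rightarrow> bool)) \<times> (nat \<times> nat \<Rightarrow> nat)) set" where
  "expansion_terms m = (SIGMA s:HT_states m. PiE (vertices m) (expansion_exps (fst s)))"

definition term_coeff ::
    "complex \<Rightarrow> nat \<Rightarrow> ((nat \<Rightarrow> nat \<Rightarrow> bool) \<times> (nat \<Rightarrow> nat \<Rightarrow> bool)) \<times> (nat \<times> nat \<Rightarrow> nat) \<Rightarrow> complex" where
  "term_coeff a m p = (\<Prod>w\<in>vertices m. expansion_coeff a (fst p) w (snd p w))"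

definition x_degree ::
    "nat \<Rightarrow> ((nat \<Rightarrow> nat \<Rightarrow> bool) \<times> (nat \<Rightarrow> nat \<Rightarrow> bool)) \<times> (nat \<times> nat \<Rightarrow> nat) \<Rightarrow> nat" where
  "x_degree m p = (\<Sum>i\<in>{1..m}. x_exponent m (snd p) i)"

definition monomial :: "nat \<Rightarrow> (nat \<Rightarrow> complex) \<Rightarrow> (nat \<Rightarrow> complex) \<Rightarrow> (nat \<Rightarrow> nat) \<Rightarrow> (nat \<Rightarrow> nat) \<Rightarrow> complex" where
  "monomial m x y \<alpha> \<beta> = (\<Prod>i\<in>{1..m}. x i ^ \<alpha> i * y i ^ \<beta> i)"

lemma finite_expansion_terms: "finite (expansion_terms m)"
  unfolding expansion_terms_def using finite_HT_states
  by (intro finite_SigmaI finite_PiE) (auto simp: expansion_exps_def)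

lemma Z_HT_tilde_eq_sum_terms:
  assumes m: "1 \<le> m" and a: "a \<noteq> 0" and xy: "\<forall>i\<in>{1..m}. x i \<noteq> 0 \<and> y i \<noteq> 0"
  shows "Z_HT_tilde m a x y = (\<Sum>p\<in>expansion_terms m.
           term_coeff a m p * monomial m x y (x_exponent m (snd p)) (y_exponent m (snd p)))"
proof -
  have "Z_HT_tilde m a x y = (\<Sum>p\<in>expansion_terms m. (\<Prod>i\<in>{1..m}. x i ^ (2*m-1) * y i ^ (2*m-1)) *
          (\<Prod>w\<in>vertices m. expansion_coeff a (fst p) w (snd p w) * expansion_monomial m x y w (snd p w)))"
    unfolding Z_HT_tilde_def Z_HT_expansion[OF a xy] expansion_terms_def sum_distrib_left
    using finite_HT_states
    by (subst sum.Sigma) (auto simp: expansion_exps_def split_def intro!: finite_PiE)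
  also have "\<dots> = (\<Sum>p\<in>expansion_terms m.
           term_coeff a m p * monomial m x y (x_exponent m (snd p)) (y_exponent m (snd p)))"
    unfolding expansion_terms_def term_coeff_def monomial_def
    using normalised_expansion_term[OF m _ _ xy] by (intro sum.cong refl) auto
  finally show ?thesis .
qed

lemma x_degree_expansion_term:
  assumes "p \<in> expansion_terms m"
  shows "x_degree m p \<le> 2*m*(2*m-1)"
    and "x_degree m p = 2*m*(2*m-1) \<Longrightarrow>
           snd p = leading_choice m (fst (fst p)) \<and> card (turns m (fst (fst p))) = m"
  using assms x_degree_le[of "fst (fst p)" "snd (fst p)" m "snd p"]
  unfolding expansion_terms_def x_degree_def by auto

lemma top_degree_terms:
  "{p\<in>expansion_terms m. x_degree m p = 2*m*(2*m-1)} =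
   (\<lambda>\<rho>. (placement_state m \<rho>, leading_choice m (fst (placement_state m \<rho>)))) ` ht_placements m m {1..m}"
proof (intro equalityI subsetI)
  fix p assume p: "p \<in> {p\<in>expansion_terms m. x_degree m p = 2*m*(2*m-1)}"
  obtain h v E where pp: "p = ((h, v), E)" by (metis prod.collapse)
  have s: "(h, v) \<in> HT_states m" using p pp unfolding expansion_terms_def by auto
  have "E = leading_choice m h" "card (turns m h) = m"
    using x_degree_expansion_term(2)[of p m] p pp by auto
  moreover obtain \<rho> where "\<rho> \<in> ht_placements m m {1..m}" and hv: "(h, v) = placement_state m \<rho>"
    using leading_state_is_placement_state[OF s \<open>card (turns m h) = m\<close>] .
  moreover have "fst (placement_state m \<rho>) = h" using hv by (metis fst_conv)
  ultimately show "p \<in> (\<lambda>\<rho>. (placement_state m \<rho>, leading_choice m (fst (placement_state m \<rho>)))) `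
      ht_placements m m {1..m}"
    using pp by (auto intro!: image_eqI)
next
  fix p assume "p \<in> (\<lambda>\<rho>. (placement_state m \<rho>, leading_choice m (fst (placement_state m \<rho>)))) `
      ht_placements m m {1..m}"
  then obtain \<rho> where \<rho>: "\<rho> \<in> ht_placements m m {1..m}"
    and pp: "p = (placement_state m \<rho>, leading_choice m (fst (placement_state m \<rho>)))" by auto
  obtain h v where hv: "placement_state m \<rho> = (h, v)" by (cases "placement_state m \<rho>") auto
  have s: "(h, v) \<in> HT_states m" using placement_state_in_HT_states[OF \<rho>] hv by simp
  have c: "card (turns m h) = m" using card_turns_placement_state[OF \<rho>] hv by simp
  have "leading_choice m h \<in> PiE (vertices m) (expansion_exps h)"
    unfolding leading_choice_def expansion_exps_def by auto
  moreover have "x_degree m p = (\<Sum>i\<in>{1..m}. 2*(2*m-1))"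
    unfolding x_degree_def pp hv using leading_exponents(1)[OF s c] by simp
  ultimately show "p \<in> {p\<in>expansion_terms m. x_degree m p = 2*m*(2*m-1)}"
    using s pp hv unfolding expansion_terms_def by simp
qed

lemma monomial_top_degree_term:
  assumes "p \<in> expansion_terms m" "x_degree m p = 2*m*(2*m-1)"
  shows "monomial m x y (x_exponent m (snd p)) (y_exponent m (snd p)) = (\<Prod>i\<in>{1..m}. x i ^ (2*(2*m-1)))"
proof -
  obtain \<rho> where \<rho>: "\<rho> \<in> ht_placements m m {1..m}"
    and p: "p = (placement_state m \<rho>, leading_choice m (fst (placement_state m \<rho>)))"
    using assms top_degree_terms by blast
  obtain h v where hv: "placement_state m \<rho> = (h, v)" by (cases "placement_state m \<rho>") auto
  have s: "(h, v) \<in> HT_states m" using placement_state_in_HT_states[OF \<rho>] hv by simp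
  have c: "card (turns m h) = m" using card_turns_placement_state[OF \<rho>] hv by simp
  show ?thesis
    unfolding monomial_def p hv using leading_exponents[OF s c] by (intro prod.cong) auto
qed

lemma top_degree_part:
  assumes a: "a \<noteq> 0"
  shows "(\<Sum>p\<in>{p\<in>expansion_terms m. x_degree m p = 2*m*(2*m-1)}.
           term_coeff a m p * monomial m x y (x_exponent m (snd p)) (y_exponent m (snd p))) =
         C_HT m a * (\<Prod>i\<in>{1..m}. x i ^ (2*(2*m-1)))"
proof -
  let ?T = "{p\<in>expansion_terms m. x_degree m p = 2*m*(2*m-1)}"
  have "inj_on (\<lambda>\<rho>. (placement_state m \<rho>, leading_choice m (fst (placement_state m \<rho>))))
      (ht_placements m m {1..m})"
    using inj_on_placement_state by (auto simp: inj_on_def)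
  then have "(\<Sum>p\<in>?T. term_coeff a m p) =
      (\<Sum>\<rho>\<in>ht_placements m m {1..m}. placement_weight a m m {1..m} \<rho>)"
    unfolding top_degree_terms term_coeff_def
    by (simp add: sum.reindex leading_coeff_placement_state)
  also have "\<dots> = C_HT m a"
    by (simp add: sum_placement_weight[OF a] C_HT_eq_prod)
  finally have "(\<Sum>p\<in>?T. term_coeff a m p) = C_HT m a" .
  moreover have "(\<Sum>p\<in>?T. term_coeff a m p * monomial m x y (x_exponent m (snd p)) (y_exponent m (snd p))) =
      (\<Sum>p\<in>?T. term_coeff a m p) * (\<Prod>i\<in>{1..m}. x i ^ (2*(2*m-1)))"
    unfolding sum_distrib_right by (rule sum.cong) (auto simp: monomial_top_degree_term)
  ultimately show ?thesis by simp
qed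

theorem lemma9:
  fixes m :: nat and a :: complex
  assumes "m \<ge> 1" and "a \<noteq> 0"
  shows "\<exists>S :: ((nat \<Rightarrow> nat) \<times> (nat \<Rightarrow> nat) \<times> complex) set.
           finite S \<and>
           (\<forall>(\<alpha>, \<beta>, c)\<in>S. (\<Sum>i\<in>{1..m}. \<alpha> i) < 2*m*(2*m-1)) \<and>
           (\<forall>x y :: nat \<Rightarrow> complex. (\<forall>i\<in>{1..m}. x i \<noteq> 0 \<and> y i \<noteq> 0) \<longrightarrow>
              Z_HT_tilde m a x y =
                C_HT m a * (\<Prod>i\<in>{1..m}. x i ^ (2*(2*m-1)))
                + (\<Sum>(\<alpha>, \<beta>, c)\<in>S. c * (\<Prod>i\<in>{1..m}. x i ^ \<alpha> i * y i ^ \<beta> i)))"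
proof -
  define T where "T = {p\<in>expansion_terms m. x_degree m p = 2*m*(2*m-1)}"
  define L where "L = {p\<in>expansion_terms m. x_degree m p < 2*m*(2*m-1)}"
  have P: "expansion_terms m = T \<union> L" "finite T" "finite L" "T \<inter> L = {}"
    using x_degree_expansion_term(1) finite_expansion_terms unfolding T_def L_def
    by (auto simp: le_less)
  obtain S where S: "finite S" "\<forall>(\<alpha>, \<beta>, c)\<in>S. \<exists>p\<in>L. \<alpha> = x_exponent m (snd p) \<and> \<beta> = y_exponent m (snd p)"
    "\<And>f. (\<Sum>p\<in>L. term_coeff a m p * f (x_exponent m (snd p)) (y_exponent m (snd p))) =
          (\<Sum>(\<alpha>, \<beta>, c)\<in>S. c * f \<alpha> \<beta>)"
    using sum_regroup_by_key[OF P(3), where c = "term_coeff a m"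
          and \<kappa> = "\<lambda>p. x_exponent m (snd p)" and \<mu> = "\<lambda>p. y_exponent m (snd p)"] by blast
  have "\<forall>(\<alpha>, \<beta>, c)\<in>S. (\<Sum>i\<in>{1..m}. \<alpha> i) < 2*m*(2*m-1)"
    using S(2) unfolding L_def x_degree_def by fastforce
  moreover have "Z_HT_tilde m a x y = C_HT m a * (\<Prod>i\<in>{1..m}. x i ^ (2*(2*m-1)))
          + (\<Sum>(\<alpha>, \<beta>, c)\<in>S. c * monomial m x y \<alpha> \<beta>)"
    if xy: "\<forall>i\<in>{1..m}. x i \<noteq> 0 \<and> y i \<noteq> 0" for x y
    unfolding Z_HT_tilde_eq_sum_terms[OF assms xy] P(1) sum.union_disjoint[OF P(2-4)] S(3)
    unfolding T_def top_degree_part[OF assms(2)] ..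
  ultimately show ?thesis using S(1) unfolding monomial_def by blast
qed

end
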